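(* Let $m,n$ be positive integers with $m\mid n$, let $1\le s\le n/m$, and let $T$ be an $(m+2)$-angulation of the once-punctured polygon $P_n^\bullet$ with exactly $s$ spokes. Then for every integer $k$, among the entries $F_T(i,j)$ with $k\le i\le k+n-1$ and $j\ge i+2$, exactly $\frac nm-s$ are equal to $1$.
   Context: $P_n^\bullet$ is a disc with $n$ boundary marked points $v_0,\ldots,v_{n-1}$ in clockwise order (indices mod $n$) and one interior puncture $\bullet$. Arcs are non-self-intersecting curves with endpoints at marked points, up to isotopy, not isotopic to a boundary segment or contractible; spokes are arcs with an endpoint at $\bullet$. An $(m+2)$-angulation is a set of pairwise non-crossing arcs such that every connected component (subgon) of the complement is an $(m+2)$-gon (sides counted with multiplicity). Let $\lambda_{m+2}=2\cos(\pi/(m+2))$. For $r\in\{0,\ldots,n-1\}$ let $c_r$ be the number of corners of subgons at $v_r$ (a subgon meeting $v_r$ in several corners is counted that many times), and set $a_i=c_{i\bmod n}\lambda_{m+2}$. The infinite frieze pattern $F_T$ is defined on $\{(i,j): j\ge i\}$ by $F_T(i,i)=0$, $F_T(i,i+1)=1$, $F_T(i,j+1)=a_jF_T(i,j)-F_T(i,j-1)$ for $j\ge i+1$. *)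

theory Defs
  imports Complex_Main
begin

text \<open>Combinatorial model of arcs in the once-punctured polygon P_n with marked
points v_0..v_(n-1) (clockwise) and interior puncture.
  Spoke i : the arc from v_i to the puncture.
  Arc i d : the arc starting at v_i such that the side NOT containing the puncture
            contains exactly the d boundary segments v_i v_(i+1), ..., v_(i+d-1) v_(i+d)
            (indices mod n); valid for 2 <= d <= n (d = n: loop at v_i around the puncture).
  Every isotopy class of arcs is represented exactly once.\<close>

datatype parc = Spoke nat | Arc nat nat

fun arc_ok :: "nat \<Rightarrow> parc \<Rightarrow> bool" where
  "arc_ok n (Spoke i) = (i < n)"
| "arc_ok n (Arc i d) = (i < n \<and> 2 \<le> d \<and> d \<le> n)"

text \<open>Lifts to the universal cover (upper half plane over the marked points Z, with
deck transformation x -> x + n, the puncture lifting to the point at infinity).\<close>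

definition lifted_arcs :: "nat \<Rightarrow> parc set \<Rightarrow> (int \<times> int) set" where
  "lifted_arcs n T = {(a, b). \<exists>i d k. Arc i d \<in> T \<and> a = int i + k * int n \<and> b = a + int d}"

definition lifted_spokes :: "nat \<Rightarrow> parc set \<Rightarrow> int set" where
  "lifted_spokes n T = {p. \<exists>i k. Spoke i \<in> T \<and> p = int i + k * int n}"

definition noncrossing :: "nat \<Rightarrow> parc set \<Rightarrow> bool" where
  "noncrossing n T \<longleftrightarrow>
     (\<forall>(a, b) \<in> lifted_arcs n T. \<forall>(c, e) \<in> lifted_arcs n T. \<not> (a < c \<and> c < b \<and> b < e)) \<and>
     (\<forall>(a, b) \<in> lifted_arcs n T. \<forall>p \<in> lifted_spokes n T. \<not> (a < p \<and> p < b))"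

text \<open>Vertex set (in Z) of the subgon lying directly below the lifted arc (a,b).\<close>
definition below_vertices :: "(int \<times> int) set \<Rightarrow> int \<Rightarrow> int \<Rightarrow> int set" where
  "below_vertices L a b = {a, b} \<union>
     {x. a < x \<and> x < b \<and> \<not> (\<exists>(c, e) \<in> L. (c, e) \<noteq> (a, b) \<and> a \<le> c \<and> c < x \<and> x < e \<and> e \<le> b)}"

text \<open>Vertex set (in Z) of the subgon between consecutive lifted spokes p < q;
this subgon has in addition the puncture (point at infinity) as a vertex.\<close>
definition between_vertices :: "(int \<times> int) set \<Rightarrow> int \<Rightarrow> int \<Rightarrow> int set" where
  "between_vertices L p q = {p, q} \<union>
     {x. p < x \<and> x < q \<and> \<not> (\<exists>(c, e) \<in> L. p \<le> c \<and> c < x \<and> x < e \<and> e \<le> q)}"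

definition angulation :: "nat \<Rightarrow> nat \<Rightarrow> parc set \<Rightarrow> bool" where
  "angulation m n T \<longleftrightarrow>
     (\<forall>\<alpha> \<in> T. arc_ok n \<alpha>) \<and> noncrossing n T \<and>
     (\<forall>(a, b) \<in> lifted_arcs n T. card (below_vertices (lifted_arcs n T) a b) = m + 2) \<and>
     (\<forall>p \<in> lifted_spokes n T. \<forall>q \<in> lifted_spokes n T.
        p < q \<and> (\<forall>r \<in> lifted_spokes n T. \<not> (p < r \<and> r < q)) \<longrightarrow>
        card (between_vertices (lifted_arcs n T) p q) + 1 = m + 2) \<and>
     (lifted_spokes n T = {} \<longrightarrow>
        card {x \<in> {0..<int n}. \<not> (\<exists>(c, e) \<in> lifted_arcs n T. c < x \<and> x < e)} = m + 2)"

definition num_spokes :: "parc set \<Rightarrow> nat" where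
  "num_spokes T = card {i. Spoke i \<in> T}"

text \<open>Number of corners of subgons at v_r: the arc ends at v_r (a loop at v_r counted
twice) cut the angle at the boundary point v_r into (number of ends + 1) corners.\<close>
definition corners :: "nat \<Rightarrow> parc set \<Rightarrow> nat \<Rightarrow> nat" where
  "corners n T r = 1 + card {i. Spoke i \<in> T \<and> i = r}
                     + card {(i, d). Arc i d \<in> T \<and> i = r}
                     + card {(i, d). Arc i d \<in> T \<and> (i + d) mod n = r}"

definition lam :: "nat \<Rightarrow> real" where
  "lam m = 2 * cos (pi / real (m + 2))"

definition frieze_a :: "nat \<Rightarrow> nat \<Rightarrow> parc set \<Rightarrow> int \<Rightarrow> real" where
  "frieze_a m n T j = real (corners n T (nat (j mod int n))) * lam m"

text \<open>frieze_aux a i t = F(i, i+t).\<close>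
fun frieze_aux :: "(int \<Rightarrow> real) \<Rightarrow> int \<Rightarrow> nat \<Rightarrow> real" where
  "frieze_aux a i 0 = 0"
| "frieze_aux a i (Suc 0) = 1"
| "frieze_aux a i (Suc (Suc t)) = a (i + int t + 1) * frieze_aux a i (Suc t) - frieze_aux a i t"

definition frieze :: "nat \<Rightarrow> nat \<Rightarrow> parc set \<Rightarrow> int \<Rightarrow> int \<Rightarrow> real" where
  "frieze m n T i j = frieze_aux (frieze_a m n T) i (nat (j - i))"

end

theory Submission
  imports Defs
begin

text \<open>In the universal cover the marked points become the integers, the arcs of T become pairs
  (a, b) with a < b, and the spokes an n-periodic set of integers. Writing the frieze as
  F(i, j) = det(v i, v j) for a planar solution of v (x + 1) + v (x - 1) = a x * v x with
  det(v x, v (x + 1)) = 1, the corner count a x distributes over the subgons at x, and along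
  the vertices of every (m + 2)-gon v satisfies the recurrence of a regular polygon with
  constant lam m. Hence F restricted to a subgon consists of the Chebyshev numbers
  sin (k pi / (m + 2)) / sin (pi / (m + 2)), which are at least 1 and equal 1 only for sides.
  From this F(i, j) \<ge> 1 for all i < j, with equality exactly for boundary segments and
  lifted arcs; across a spoke even F(i, j) > 1, because at consecutive spokes v advances by
  lam m times a fixed vector. So the entries 1 with i in a window of length n correspond to
  the arcs of T, and since each subgon adds m to the width of the region containing it,
  n = m (s + number of arcs).\<close>

section \<open>Chebyshev numbers at lam m\<close>

text \<open>cheb l k is the Chebyshev polynomial of the second kind U (k - 1) evaluated at l / 2.\<close>

fun cheb :: "real \<Rightarrow> nat \<Rightarrow> real" where
  "cheb l 0 = 0"
| "cheb l (Suc 0) = 1"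
| "cheb l (Suc (Suc k)) = l * cheb l (Suc k) - cheb l k"

lemma cheb_cos:
  assumes "sin t \<noteq> 0"
  shows "cheb (2 * cos t) k = sin (real k * t) / sin t"
proof (induction "2 * cos t" k rule: cheb.induct)
  case (3 k)
  have "sin (real k * t + 2 * t) + sin (real k * t) = 2 * cos t * sin (real k * t + t)"
    using sin_add[of "real k * t + t" t] sin_diff[of "real k * t + t" t]
    by (simp add: algebra_simps)
  then show ?case
    using 3 assms by (simp add: field_simps distrib_right)
qed (use assms in simp_all)

definition theta :: "nat \<Rightarrow> real" where
  "theta m = pi / real (m + 2)"

lemma theta_pos: "0 < theta m"
  by (simp add: theta_def)

lemma theta_mult: "real (m + 2) * theta m = pi"
  by (simp add: theta_def)

lemma sin_theta_pos: "0 < sin (theta m)"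
proof (rule sin_gt_zero[OF theta_pos])
  show "theta m < pi"
    by (simp add: theta_def divide_less_eq)
qed

lemma lam_eq_cos_theta: "lam m = 2 * cos (theta m)"
  by (simp add: lam_def theta_def)

lemma cheb_lam: "cheb (lam m) k = sin (real k * theta m) / sin (theta m)"
  using cheb_cos sin_theta_pos[of m] by (simp add: lam_eq_cos_theta)

lemma lam_1: "lam 1 = 1"
  by (simp add: lam_def cos_60)

lemma lam_ge_1: "0 < m \<Longrightarrow> 1 \<le> lam m"
proof -
  assume "0 < m"
  then have "theta m \<le> pi / 3"
    unfolding theta_def by (intro divide_left_mono) auto
  then have "cos (pi / 3) \<le> cos (theta m)"
    using theta_pos[of m] by (intro cos_monotone_0_pi_le) auto
  then show ?thesis
    by (simp add: lam_eq_cos_theta cos_60)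
qed

lemma lam_less_2: "lam m < 2"
proof -
  have "theta m \<le> pi / 2"
    unfolding theta_def by (intro divide_left_mono) auto
  then have "cos (theta m) < cos 0"
    using theta_pos[of m] by (intro cos_monotone_0_pi) auto
  then show ?thesis
    by (simp add: lam_eq_cos_theta)
qed

lemma cheb_lam_minus_1:
  "cheb (lam m) k - 1
     = 2 * sin ((real k - 1) * theta m / 2) * cos ((real k + 1) * theta m / 2) / sin (theta m)"
proof -
  have "sin (real k * theta m) - sin (theta m)
      = 2 * sin ((real k - 1) * theta m / 2) * cos ((real k + 1) * theta m / 2)"
    by (simp add: sin_diff_sin algebra_simps)
  then show ?thesis
    using sin_theta_pos[of m] by (simp add: cheb_lam field_simps)
qed

lemma cheb_lam_ge_1:
  assumes "1 \<le> k" "k \<le> m + 1"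
  shows "1 \<le> cheb (lam m) k"
proof -
  have "(real k + 1) * theta m \<le> real (m + 2) * theta m"
    using assms theta_pos[of m] by (intro mult_right_mono) auto
  then have bound: "(real k + 1) * theta m \<le> pi"
    using theta_mult[of m] by simp
  have "(real k - 1) * theta m \<le> (real k + 1) * theta m"
    using theta_pos[of m] by (intro mult_right_mono) auto
  then have half: "(real k - 1) * theta m / 2 < pi"
    using bound pi_gt_zero by linarith
  have "0 \<le> sin ((real k - 1) * theta m / 2)"
    using assms theta_pos[of m] half by (intro sin_ge_zero) auto
  moreover have "0 \<le> cos ((real k + 1) * theta m / 2)"
    using bound pi_gt_zero mult_pos_pos[OF _ theta_pos, of "real k + 1" m]
    by (intro cos_ge_zero) linarith+
  ultimately have "0 \<le> 2 * sin ((real k - 1) * theta m / 2) * cos ((real k + 1) * theta m / 2)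
      / sin (theta m)"
    using sin_theta_pos[of m] by simp
  then show ?thesis
    using cheb_lam_minus_1[of m k] by linarith
qed

lemma cheb_lam_gt_1:
  assumes "2 \<le> k" "k \<le> m"
  shows "1 < cheb (lam m) k"
proof -
  have "(real k + 1) * theta m < real (m + 2) * theta m"
    using assms theta_pos[of m] by (intro mult_strict_right_mono) auto
  then have bound: "(real k + 1) * theta m < pi"
    using theta_mult[of m] by simp
  have "(real k - 1) * theta m \<le> (real k + 1) * theta m"
    using theta_pos[of m] by (intro mult_right_mono) auto
  then have half: "(real k - 1) * theta m / 2 < pi"
    using bound pi_gt_zero by linarith
  have "0 < sin ((real k - 1) * theta m / 2)"
    using assms theta_pos[of m] half by (intro sin_gt_zero) auto
  moreover have "0 < cos ((real k + 1) * theta m / 2)"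
    using bound pi_gt_zero mult_pos_pos[OF _ theta_pos, of "real k + 1" m]
    by (intro cos_gt_zero_pi) linarith+
  ultimately have "0 < 2 * sin ((real k - 1) * theta m / 2) * cos ((real k + 1) * theta m / 2)
      / sin (theta m)"
    using sin_theta_pos[of m] by simp
  then show ?thesis
    using cheb_lam_minus_1[of m k] by linarith
qed

lemma cheb_lam_nonneg: "k \<le> m + 1 \<Longrightarrow> 0 \<le> cheb (lam m) k"
  using cheb_lam_ge_1[of k m] by (cases k) auto

lemma cheb_lam_Suc_m: "cheb (lam m) (Suc m) = 1"
proof -
  have "real (m + 1) * theta m = pi - theta m"
    using theta_mult[of m] by (simp add: algebra_simps)
  then show ?thesis
    using sin_theta_pos[of m] by (simp add: cheb_lam)
qed

lemma cheb_lam_m: "cheb (lam m) m = lam m"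
proof -
  have "real m * theta m = pi - 2 * theta m"
    using theta_mult[of m] by (simp add: algebra_simps)
  then have "cheb (lam m) m = sin (2 * theta m) / sin (theta m)"
    by (simp add: cheb_lam)
  also have "\<dots> = lam m"
    using sin_theta_pos[of m] by (simp add: sin_double lam_eq_cos_theta)
  finally show ?thesis .
qed

lemma cheb_lam_pred_m:
  assumes "0 < m"
  shows "cheb (lam m) (m - 1) = (lam m)\<^sup>2 - 1"
proof -
  obtain m' where m': "m = Suc m'"
    using assms by (cases m) auto
  have "cheb (lam m) (Suc (Suc m')) = lam m * cheb (lam m) (Suc m') - cheb (lam m) m'"
    by simp
  then show ?thesis
    using cheb_lam_Suc_m[of m] cheb_lam_m[of m] m' by (simp add: power2_eq_square)
qed

section \<open>Three-term recurrences in the plane\<close>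

definition wedge :: "complex \<Rightarrow> complex \<Rightarrow> real" where
  "wedge z w = Re z * Im w - Im z * Re w"

lemma wedge_self [simp]: "wedge z z = 0"
  and wedge_add_left [simp]: "wedge (z + u) w = wedge z w + wedge u w"
  and wedge_add_right [simp]: "wedge z (w + u) = wedge z w + wedge z u"
  and wedge_diff_left [simp]: "wedge (z - u) w = wedge z w - wedge u w"
  and wedge_diff_right [simp]: "wedge z (w - u) = wedge z w - wedge z u"
  and wedge_scale_left [simp]: "wedge (of_real c * z) w = c * wedge z w"
  and wedge_scale_right [simp]: "wedge z (of_real c * w) = c * wedge z w"
  by (simp_all add: wedge_def algebra_simps)

lemma wedge_antisym: "wedge w z = - wedge z w"
  by (simp add: wedge_def)

lemma cramer: "of_real (wedge p q) * z = of_real (wedge z q) * p + of_real (wedge p z) * q"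
  by (simp add: wedge_def complex_eq_iff algebra_simps)

definition chain_rec :: "real \<Rightarrow> nat \<Rightarrow> (nat \<Rightarrow> complex) \<Rightarrow> bool" where
  "chain_rec l N w \<longleftrightarrow> (\<forall>k. Suc (Suc k) < N \<longrightarrow> w k + w (Suc (Suc k)) = of_real l * w (Suc k))"

lemma chain_rec_expand:
  assumes "chain_rec l N w" "i + Suc t < N"
  shows "w (i + Suc t) = of_real (cheb l (Suc t)) * w (Suc i) - of_real (cheb l t) * w i"
  using assms(2)
proof (induction t rule: induct_nat_012)
  case (ge2 t)
  have "w (i + Suc t) + w (i + Suc (Suc (Suc t))) = of_real l * w (i + Suc (Suc t))"
    using assms(1) ge2.prems unfolding chain_rec_def by (metis add_Suc_right)
  then have "w (i + Suc (Suc (Suc t))) = of_real l * w (i + Suc (Suc t)) - w (i + Suc t)"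
    by (simp add: algebra_simps)
  also have "\<dots> = of_real l * (of_real (cheb l (Suc (Suc t))) * w (Suc i) - of_real (cheb l (Suc t)) * w i)
      - (of_real (cheb l (Suc t)) * w (Suc i) - of_real (cheb l t) * w i)"
    using ge2 by simp
  finally show ?case
    by (simp add: algebra_simps)
next
  case 1
  then show ?case
    using assms(1) unfolding chain_rec_def by (simp add: algebra_simps)
qed simp

lemma chain_rec_wedge_Suc:
  assumes "chain_rec l N w" "wedge (w 0) (w 1) = 1" "Suc k < N"
  shows "wedge (w k) (w (Suc k)) = 1"
  using assms(3)
proof (induction k)
  case (Suc k)
  then have "w (Suc (Suc k)) = of_real l * w (Suc k) - w k"
    using assms(1) unfolding chain_rec_def by (simp add: algebra_simps)
  then show ?case
    using Suc wedge_antisym[of "w (Suc k)" "w k"] by simp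
qed (use assms(2) in simp)

lemma chain_rec_wedge:
  assumes "chain_rec l N w" "wedge (w 0) (w 1) = 1" "i \<le> j" "j < N"
  shows "wedge (w i) (w j) = cheb l (j - i)"
proof (cases "i = j")
  case False
  define t where "t = j - Suc i"
  have j: "j = i + Suc t"
    using False assms(3) unfolding t_def by simp
  have "wedge (w i) (w (Suc i)) = 1"
    using chain_rec_wedge_Suc[OF assms(1,2)] assms(4) j by simp
  then show ?thesis
    using chain_rec_expand[OF assms(1)] assms(4) j by simp
qed simp

lemma chain_rec_expand_0:
  assumes "chain_rec l N w" "1 \<le> k" "k < N"
  shows "w k = of_real (cheb l k) * w 1 - of_real (cheb l (k - 1)) * w 0"
  using chain_rec_expand[OF assms(1), of 0 "k - 1"] assms(2,3) by simp

lemma strict_sorted_nth_le: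
  "sorted_wrt (<) zs \<Longrightarrow> i \<le> j \<Longrightarrow> j < length zs \<Longrightarrow> zs ! i \<le> (zs ! j :: 'a :: linorder)"
  by (simp add: sorted_nth_mono strict_sorted_imp_sorted)

lemma strict_sorted_nth_less_iff:
  "sorted_wrt (<) zs \<Longrightarrow> i < length zs \<Longrightarrow> j < length zs \<Longrightarrow> zs ! i < (zs ! j :: 'a :: linorder) \<longleftrightarrow> i < j"
  using sorted_wrt_nth_less[of "(<)" zs] strict_sorted_nth_le[of zs j i] by (cases "i < j") auto

lemma strict_sorted_no_member_between:
  assumes "sorted_wrt (<) zs" "Suc k < length zs" "y \<in> set zs"
  shows "\<not> (zs ! k < y \<and> y < (zs ! Suc k :: 'a :: linorder))"
proof
  assume between: "zs ! k < y \<and> y < zs ! Suc k"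
  obtain j where j: "j < length zs" "y = zs ! j"
    using assms(3) by (auto simp: in_set_conv_nth)
  have "k < j" "j < Suc k"
    using strict_sorted_nth_less_iff[OF assms(1)] assms(2) j between by auto
  then show False
    by simp
qed

lemma strict_sorted_bracket_left:
  assumes "sorted_wrt (<) zs" "2 \<le> length zs" "zs ! 0 \<le> x" "x < zs ! (length zs - 1)"
  shows "\<exists>k. Suc k < length zs \<and> zs ! k \<le> x \<and> x < (zs ! Suc k :: 'a :: linorder)"
proof -
  define S where "S = {k. k < length zs \<and> zs ! k \<le> x}"
  define k where "k = Max S"
  have "finite S" "0 \<in> S"
    using assms unfolding S_def by auto
  then have "k \<in> S" and k_max: "\<And>j. j \<in> S \<Longrightarrow> j \<le> k"
    unfolding k_def by (auto intro: Max_in)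
  then have k: "k < length zs" "zs ! k \<le> x"
    unfolding S_def by auto
  have "k \<noteq> length zs - 1"
    using k assms(4) by auto
  then have "Suc k < length zs"
    using k by linarith
  moreover have "\<not> zs ! Suc k \<le> x"
    using k_max[of "Suc k"] calculation unfolding S_def by auto
  ultimately show ?thesis
    using k by auto
qed

lemma strict_sorted_bracket_right:
  assumes "sorted_wrt (<) zs" "2 \<le> length zs" "zs ! 0 < y" "y \<le> zs ! (length zs - 1)"
  shows "\<exists>l. 0 < l \<and> l < length zs \<and> zs ! (l - 1) < y \<and> y \<le> (zs ! l :: 'a :: linorder)"
proof -
  define S where "S = {l. l < length zs \<and> y \<le> zs ! l}"
  define l where "l = Min S"
  have "finite S" "length zs - 1 \<in> S"
    using assms unfolding S_def by auto
  then have "l \<in> S" and l_min: "\<And>j. j \<in> S \<Longrightarrow> l \<le> j"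
    unfolding l_def by (auto intro: Min_in)
  then have l: "l < length zs" "y \<le> zs ! l"
    unfolding S_def by auto
  have "0 < l"
    using l assms(3) by (cases "l = 0") auto
  moreover have "l - 1 \<notin> S"
    using l_min[of "l - 1"] calculation by fastforce
  then have "\<not> y \<le> zs ! (l - 1)"
    using l unfolding S_def by auto
  ultimately show ?thesis
    using l by auto
qed

section \<open>Subgons between arcs of the universal cover\<close>

text \<open>With X the arcs other than (a, b), these are the vertices of the subgon below the arc
  (a, b); with X all arcs and a, b consecutive spokes, the vertices of the subgon between the
  spokes other than the puncture.\<close>

definition region_vertices :: "(int \<times> int) set \<Rightarrow> int \<Rightarrow> int \<Rightarrow> int set" where
  "region_vertices X a b =
     {a, b} \<union> {x. a < x \<and> x < b \<and> \<not> (\<exists>(c, e) \<in> X. a \<le> c \<and> c < x \<and> x < e \<and> e \<le> b)}"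

lemma below_vertices_eq: "below_vertices L a b = region_vertices (L - {(a, b)}) a b"
  unfolding below_vertices_def region_vertices_def by fast

lemma between_vertices_eq: "between_vertices L p q = region_vertices L p q"
  unfolding between_vertices_def region_vertices_def by simp

lemma region_vertices_not_below:
  assumes "x \<in> region_vertices X a b" "(c, e) \<in> X" "a \<le> c" "e \<le> b" "c < x" "x < e"
  shows False
  using assms unfolding region_vertices_def by auto

lemma region_vertices_subset: "a \<le> b \<Longrightarrow> region_vertices X a b \<subseteq> {a..b}"
  unfolding region_vertices_def by auto

lemma finite_region_vertices: "finite (region_vertices X a b)"
proof (rule finite_subset)
  show "region_vertices X a b \<subseteq> {a, b} \<union> {a<..<b}"
    unfolding region_vertices_def by auto
qed simp

lemma region_vertices_ends: "a \<in> region_vertices X a b" "b \<in> region_vertices X a b"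
  unfolding region_vertices_def by auto

definition noncrossing_arcs :: "(int \<times> int) set \<Rightarrow> bool" where
  "noncrossing_arcs X \<longleftrightarrow> (\<forall>(a, b) \<in> X. \<forall>(c, e) \<in> X. \<not> (a < c \<and> c < b \<and> b < e))"

text \<open>Two consecutive vertices x < y of a region are joined by a boundary segment or by an arc:
  otherwise x + 1 is hidden below some arc, which has to start at x, and the longest arc from x
  that ends before y would hide its own endpoint from the region.\<close>

lemma region_vertices_consecutive:
  assumes nc: "noncrossing_arcs X"
    and x: "x \<in> region_vertices X a b" and y: "y \<in> region_vertices X a b" and "x < y"
    and gap: "\<And>z. z \<in> region_vertices X a b \<Longrightarrow> \<not> (x < z \<and> z < y)"
    and "a \<le> b"
  shows "y = x + 1 \<or> (x, y) \<in> X"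
proof (rule ccontr)
  assume not_edge: "\<not> (y = x + 1 \<or> (x, y) \<in> X)"
  have xa: "a \<le> x" and yb: "y \<le> b"
    using region_vertices_subset[OF \<open>a \<le> b\<close>, where X = X] x y by auto
  have hides_from_x: "c = x \<and> e \<le> y"
    if "(c, e) \<in> X" "a \<le> c" "e \<le> b" "c \<le> x" "x < e" for c e
    using region_vertices_not_below[OF x that(1-3)] region_vertices_not_below[OF y that(1-3)]
      that(4,5) \<open>x < y\<close> by force
  have "x + 1 \<notin> region_vertices X a b"
    using gap[of "x + 1"] not_edge \<open>x < y\<close> by auto
  then obtain c e where ce: "(c, e) \<in> X" "a \<le> c" "c < x + 1" "x + 1 < e" "e \<le> b"
    unfolding region_vertices_def using xa yb not_edge \<open>x < y\<close> by auto
  define E where "E = {e. (x, e) \<in> X \<and> x < e \<and> e \<le> y}"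
  have "e \<in> E"
    using hides_from_x[OF ce(1,2,5)] ce unfolding E_def by auto
  moreover have "finite E"
    unfolding E_def by (rule finite_subset[of _ "{x<..y}"]) auto
  ultimately have "Max E \<in> E" and E_max: "\<And>e. e \<in> E \<Longrightarrow> e \<le> Max E"
    by (auto intro: Max_in)
  then have e0: "(x, Max E) \<in> X" "x < Max E" "Max E < y"
    using not_edge unfolding E_def by (auto simp: order.order_iff_strict)
  then have "Max E \<notin> region_vertices X a b"
    using gap by auto
  then obtain c' e' where ce': "(c', e') \<in> X" "a \<le> c'" "c' < Max E" "Max E < e'" "e' \<le> b"
    unfolding region_vertices_def using xa yb e0 by auto
  have "\<not> x < c'"
    using nc ce'(1) e0(1) ce'(3,4) unfolding noncrossing_arcs_def by fastforce
  then have "e' \<in> E"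
    using hides_from_x[OF ce'(1,2,5)] ce' e0 unfolding E_def by auto
  then show False
    using E_max ce'(4) by fastforce
qed

definition region_list :: "(int \<times> int) set \<Rightarrow> int \<Rightarrow> int \<Rightarrow> int list" where
  "region_list X a b = sorted_list_of_set (region_vertices X a b)"

lemma region_list:
  assumes "a \<le> b" "card (region_vertices X a b) = Suc N"
  defines "zs \<equiv> region_list X a b"
  shows "sorted_wrt (<) zs" "set zs = region_vertices X a b" "length zs = Suc N"
    "zs ! 0 = a" "zs ! N = b"
proof -
  show sorted: "sorted_wrt (<) zs" and set: "set zs = region_vertices X a b"
    and length: "length zs = Suc N"
    using assms finite_region_vertices unfolding region_list_def by auto
  have "zs ! 0 \<in> set zs" "zs ! N \<in> set zs"
    using length by auto
  then have "a \<le> zs ! 0" "zs ! N \<le> b"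
    using set region_vertices_subset[OF assms(1), where X = X] by auto
  moreover have "a \<in> set zs" "b \<in> set zs"
    using region_vertices_ends set by auto
  then obtain i j where "i < Suc N" "zs ! i = a" "j < Suc N" "zs ! j = b"
    unfolding in_set_conv_nth length by blast
  ultimately show "zs ! 0 = a" "zs ! N = b"
    using strict_sorted_nth_le[OF sorted, of 0 i] strict_sorted_nth_le[OF sorted, of j N] length
    by auto
qed

lemma region_list_step:
  assumes "noncrossing_arcs X" "a \<le> b" "card (region_vertices X a b) = Suc N" "k < N"
  defines "zs \<equiv> region_list X a b"
  shows "zs ! Suc k = zs ! k + 1 \<or> (zs ! k, zs ! Suc k) \<in> X"
proof (rule region_vertices_consecutive[OF assms(1) _ _ _ _ assms(2)])
  note zs = region_list[OF assms(2,3), folded zs_def]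
  show "zs ! k \<in> region_vertices X a b" "zs ! Suc k \<in> region_vertices X a b"
    using zs(2,3) assms(4) nth_mem[of k zs] nth_mem[of "Suc k" zs] by auto
  show "zs ! k < zs ! Suc k"
    using sorted_wrt_nth_less[OF zs(1)] zs(3) assms(4) by simp
  show "\<not> (zs ! k < z \<and> z < zs ! Suc k)" if "z \<in> region_vertices X a b" for z
    using strict_sorted_no_member_between[OF zs(1)] zs(2,3) assms(4) that by simp
qed

lemma region_list_arc_from:
  assumes "a \<le> b" "card (region_vertices X a b) = Suc N" "k < N"
    and "(region_list X a b ! k, r) \<in> X" "r \<le> b"
  shows "r \<le> region_list X a b ! Suc k"
proof (rule ccontr)
  note zs = region_list[OF assms(1,2)]
  assume "\<not> r \<le> region_list X a b ! Suc k"
  moreover have "region_list X a b ! Suc k \<in> region_vertices X a b"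
    using zs(2,3) assms(3) nth_mem[of "Suc k" "region_list X a b"] by auto
  moreover have "a \<le> region_list X a b ! k" "region_list X a b ! k < region_list X a b ! Suc k"
    using strict_sorted_nth_le[OF zs(1), of 0 k] sorted_wrt_nth_less[OF zs(1), of k "Suc k"]
      zs(3,4) assms(3) by auto
  ultimately show False
    using region_vertices_not_below assms(4,5) by fastforce
qed

lemma region_list_arc_to:
  assumes "a \<le> b" "card (region_vertices X a b) = Suc N" "0 < k" "k \<le> N"
    and "(r, region_list X a b ! k) \<in> X" "a \<le> r"
  shows "region_list X a b ! (k - 1) \<le> r"
proof (rule ccontr)
  note zs = region_list[OF assms(1,2)]
  assume "\<not> region_list X a b ! (k - 1) \<le> r"
  moreover have "region_list X a b ! (k - 1) \<in> region_vertices X a b"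
    using zs(2,3) assms(4) nth_mem[of "k - 1" "region_list X a b"] by auto
  moreover have "region_list X a b ! k \<le> b" "region_list X a b ! (k - 1) < region_list X a b ! k"
    using strict_sorted_nth_le[OF zs(1), of k N] sorted_wrt_nth_less[OF zs(1), of "k - 1" k]
      zs(3,5) assms(3,4) by auto
  ultimately show False
    using region_vertices_not_below assms(5,6) by fastforce
qed

section \<open>Lifted angulations\<close>

text \<open>L and P play the role of the lifts of the arcs and of the spokes. The subgon between
  two consecutive spokes has m + 1 vertices in Z because its remaining vertex is the puncture.\<close>

locale lifted_angulation =
  fixes m n :: nat and L :: "(int \<times> int) set" and P :: "int set"
  assumes m_pos: "0 < m" and n_pos: "0 < n"
    and arc_bounds: "(a, b) \<in> L \<Longrightarrow> a + 2 \<le> b \<and> b \<le> a + int n"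
    and spokes_periodic: "p \<in> P \<Longrightarrow> p + k * int n \<in> P"
    and spokes_nonempty: "P \<noteq> {}"
    and arcs_noncrossing: "noncrossing_arcs L"
    and arc_spoke_noncrossing: "(a, b) \<in> L \<Longrightarrow> p \<in> P \<Longrightarrow> \<not> (a < p \<and> p < b)"
    and card_below_arc: "(a, b) \<in> L \<Longrightarrow> card (region_vertices (L - {(a, b)}) a b) = m + 2"
    and card_between_spokes: "p \<in> P \<Longrightarrow> q \<in> P \<Longrightarrow> p < q \<Longrightarrow> (\<forall>r\<in>P. \<not> (p < r \<and> r < q))
      \<Longrightarrow> card (region_vertices L p q) = m + 1"
begin

lemma arc_less: "(a, b) \<in> L \<Longrightarrow> a < b"
  using arc_bounds[of a b] by simp

lemma arcs_not_crossing: "(a, b) \<in> L \<Longrightarrow> (c, e) \<in> L \<Longrightarrow> \<not> (a < c \<and> c < b \<and> b < e)"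
  using arcs_noncrossing unfolding noncrossing_arcs_def by fast

lemma finite_arcs_from: "finite {b. (x, b) \<in> L}"
  by (rule finite_subset[of _ "{x..x + int n}"]) (auto dest: arc_bounds)

lemma finite_arcs_to: "finite {a. (a, x) \<in> L}"
  by (rule finite_subset[of _ "{x - int n..x}"]) (auto dest: arc_bounds)

abbreviation below_list :: "int \<Rightarrow> int \<Rightarrow> int list" where
  "below_list a b \<equiv> region_list (L - {(a, b)}) a b"

lemma below_list:
  assumes "(a, b) \<in> L"
  shows "sorted_wrt (<) (below_list a b)" "set (below_list a b) = region_vertices (L - {(a, b)}) a b"
    "length (below_list a b) = m + 2" "below_list a b ! 0 = a" "below_list a b ! (m + 1) = b"
  using region_list[of a b "L - {(a, b)}" "m + 1"] arc_less[OF assms] card_below_arc[OF assms]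
  by auto

lemma below_list_step:
  assumes "(a, b) \<in> L" "k \<le> m"
  shows "below_list a b ! Suc k = below_list a b ! k + 1
    \<or> (below_list a b ! k, below_list a b ! Suc k) \<in> L - {(a, b)}"
proof (rule region_list_step)
  show "noncrossing_arcs (L - {(a, b)})"
    using arcs_noncrossing unfolding noncrossing_arcs_def by blast
qed (use assms arc_less[OF assms(1)] card_below_arc[OF assms(1)] in auto)

lemma below_list_inner:
  assumes "(a, b) \<in> L" "i \<le> m + 1"
  shows "a \<le> below_list a b ! i" "below_list a b ! i \<le> b"
    "0 < i \<Longrightarrow> a < below_list a b ! i" "i < m + 1 \<Longrightarrow> below_list a b ! i < b"
proof -
  note zs = below_list[OF assms(1)]
  show "a \<le> below_list a b ! i"
    using strict_sorted_nth_le[OF zs(1), of 0 i] zs(3,4) assms(2) by simp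
  show "below_list a b ! i \<le> b"
    using strict_sorted_nth_le[OF zs(1), of i "m + 1"] zs(3,5) assms(2) by simp
  show "a < below_list a b ! i" if "0 < i"
    using sorted_wrt_nth_less[OF zs(1), of 0 i] zs(3,4) assms(2) that by simp
  show "below_list a b ! i < b" if "i < m + 1"
    using sorted_wrt_nth_less[OF zs(1), of i "m + 1"] zs(3,5) assms(2) that by simp
qed

definition consecutive :: "int \<Rightarrow> int \<Rightarrow> bool" where
  "consecutive p q \<longleftrightarrow> p \<in> P \<and> q \<in> P \<and> p < q \<and> (\<forall>r\<in>P. \<not> (p < r \<and> r < q))"

abbreviation sector_list :: "int \<Rightarrow> int \<Rightarrow> int list" where
  "sector_list p q \<equiv> region_list L p q"

lemma sector_list:
  assumes "consecutive p q"
  shows "sorted_wrt (<) (sector_list p q)" "set (sector_list p q) = region_vertices L p q"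
    "length (sector_list p q) = m + 1" "sector_list p q ! 0 = p" "sector_list p q ! m = q"
  using region_list[of p q L m] card_between_spokes[of p q] assms
  unfolding consecutive_def by auto

lemma sector_list_step:
  assumes "consecutive p q" "k < m"
  shows "sector_list p q ! Suc k = sector_list p q ! k + 1
    \<or> (sector_list p q ! k, sector_list p q ! Suc k) \<in> L"
  using region_list_step[OF arcs_noncrossing, of p q m k] card_between_spokes[of p q] assms
  unfolding consecutive_def by auto

lemma spoke_in_window: "\<exists>p\<in>P. x - int n < p \<and> p \<le> x"
proof -
  obtain p where p: "p \<in> P"
    using spokes_nonempty by blast
  define k where "k = (x - p) div int n"
  have "k * int n + (x - p) mod int n = x - p"
    unfolding k_def by (rule div_mult_mod_eq)
  moreover have "0 \<le> (x - p) mod int n" "(x - p) mod int n < int n"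
    using n_pos by simp_all
  ultimately have "x - int n < p + k * int n" "p + k * int n \<le> x"
    by linarith+
  then show ?thesis
    using spokes_periodic[OF p, of k] by blast
qed

lemma greatest_spoke_le: "\<exists>p\<in>P. p \<le> x \<and> (\<forall>r\<in>P. r \<le> x \<longrightarrow> r \<le> p)"
proof -
  obtain p1 where p1: "p1 \<in> P" "x - int n < p1" "p1 \<le> x"
    using spoke_in_window by blast
  define S where "S = {p\<in>P. x - int n < p \<and> p \<le> x}"
  have "finite S"
    unfolding S_def by (rule finite_subset[of _ "{x - int n<..x}"]) auto
  moreover have "p1 \<in> S"
    using p1 unfolding S_def by simp
  ultimately have "Max S \<in> S" and S_max: "\<And>r. r \<in> S \<Longrightarrow> r \<le> Max S"
    by (auto intro: Max_in)
  moreover have "r \<le> Max S" if "r \<in> P" "r \<le> x" for r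
  proof (cases "x - int n < r")
    case True
    then show ?thesis
      using S_max[of r] that unfolding S_def by simp
  next
    case False
    then show ?thesis
      using S_max[OF \<open>p1 \<in> S\<close>] p1 by simp
  qed
  ultimately show ?thesis
    unfolding S_def by blast
qed

lemma least_spoke_ge: "\<exists>q\<in>P. x \<le> q \<and> (\<forall>r\<in>P. x \<le> r \<longrightarrow> q \<le> r)"
proof -
  obtain p1 where p1: "p1 \<in> P" "x - int n < p1" "p1 \<le> x"
    using spoke_in_window by blast
  have q1: "p1 + int n \<in> P"
    using spokes_periodic[OF p1(1), of 1] by simp
  define S where "S = {q\<in>P. x \<le> q \<and> q \<le> x + int n}"
  have "finite S"
    unfolding S_def by (rule finite_subset[of _ "{x..x + int n}"]) auto
  moreover have "p1 + int n \<in> S"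
    using p1 q1 unfolding S_def by simp
  ultimately have "Min S \<in> S" and S_min: "\<And>r. r \<in> S \<Longrightarrow> Min S \<le> r"
    by (auto intro: Min_in)
  moreover have "Min S \<le> r" if "r \<in> P" "x \<le> r" for r
  proof (cases "r \<le> x + int n")
    case True
    then show ?thesis
      using S_min[of r] that unfolding S_def by simp
  next
    case False
    then show ?thesis
      using S_min[OF \<open>p1 + int n \<in> S\<close>] p1 by simp
  qed
  ultimately show ?thesis
    unfolding S_def by blast
qed

lemma consecutive_around:
  assumes "x < y" "\<not> (\<exists>r\<in>P. x < r \<and> r < y)"
  shows "\<exists>p q. consecutive p q \<and> p \<le> x \<and> y \<le> q"
proof -
  obtain p where p: "p \<in> P" "p \<le> x" "\<forall>r\<in>P. r \<le> x \<longrightarrow> r \<le> p"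
    using greatest_spoke_le by blast
  obtain q where q: "q \<in> P" "y \<le> q" "\<forall>r\<in>P. y \<le> r \<longrightarrow> q \<le> r"
    using least_spoke_ge by blast
  have "\<not> (p < r \<and> r < q)" if "r \<in> P" for r
    using p(3) q(3) assms(2) that by force
  then have "consecutive p q"
    unfolding consecutive_def using p q assms(1) by auto
  then show ?thesis
    using p q by blast
qed

lemma consecutive_unique:
  assumes "consecutive p q" "consecutive p q'"
  shows "q = q'"
proof (rule ccontr)
  assume "q \<noteq> q'"
  then have "q < q' \<or> q' < q"
    by linarith
  then show False
    using assms unfolding consecutive_def by blast
qed

definition next_spoke :: "int \<Rightarrow> int" where
  "next_spoke p = (THE q. consecutive p q)"

lemma consecutive_next_spoke:
  assumes "p \<in> P"
  shows "consecutive p (next_spoke p)"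
proof -
  obtain q where "q \<in> P" "p + 1 \<le> q" "\<forall>r\<in>P. p + 1 \<le> r \<longrightarrow> q \<le> r"
    using least_spoke_ge by blast
  moreover have "\<not> (p < r \<and> r < q)" if "r \<in> P" for r
    using calculation that by force
  ultimately have "consecutive p q"
    unfolding consecutive_def using assms by auto
  then have "\<exists>!q. consecutive p q"
    using consecutive_unique by blast
  then show ?thesis
    unfolding next_spoke_def by (rule theI')
qed

lemma next_spoke_eq:
  assumes "consecutive p q"
  shows "next_spoke p = q"
proof -
  have "p \<in> P"
    using assms unfolding consecutive_def by simp
  then show ?thesis
    using assms consecutive_next_spoke consecutive_unique by blast
qed

lemma next_spoke_le:
  assumes "p \<in> P" "p' \<in> P" "p < p'"
  shows "next_spoke p \<le> p'"
  using consecutive_next_spoke[OF assms(1)] assms(2,3) unfolding consecutive_def by (meson not_le)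

definition arcs_within :: "int \<Rightarrow> int \<Rightarrow> (int \<times> int) set" where
  "arcs_within a b = {(c, e) \<in> L. a \<le> c \<and> e \<le> b}"

lemma finite_arcs_within: "finite (arcs_within a b)"
  by (rule finite_subset[of _ "{a..b} \<times> {a..b}"]) (auto simp: arcs_within_def dest: arc_less)

lemma arcs_within_short: "b \<le> a + 1 \<Longrightarrow> arcs_within a b = {}"
  unfolding arcs_within_def by (auto dest: arc_bounds)

context
  fixes X :: "(int \<times> int) set" and a b :: int and N :: nat
  assumes X: "X \<subseteq> L" and "a \<le> b" and card_region: "card (region_vertices X a b) = Suc N"
    and gaps_in_X: "\<And>k. k < N \<Longrightarrow> arcs_within (region_list X a b ! k) (region_list X a b ! Suc k) \<subseteq> X"
begin

private lemma arcs_of_region_eq_Union: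
  defines "zs \<equiv> region_list X a b"
  shows "{(c, e) \<in> X. a \<le> c \<and> e \<le> b} = (\<Union>k<N. arcs_within (zs ! k) (zs ! Suc k))"
proof (intro set_eqI iffI)
  note zs = region_list[OF \<open>a \<le> b\<close> card_region, folded zs_def]
  fix ce
  assume "ce \<in> {(c, e) \<in> X. a \<le> c \<and> e \<le> b}"
  then obtain c e where ce: "ce = (c, e)" "(c, e) \<in> X" "a \<le> c" "e \<le> b"
    by auto
  moreover have "c < e"
    using arc_less[of c e] ce(2) X by auto
  ultimately have "c < zs ! (length zs - 1)"
    using zs(3,5) by simp
  moreover have "2 \<le> length zs"
    using calculation zs(3,4) ce(3) by (cases N) auto
  ultimately obtain k where k: "Suc k < length zs" "zs ! k \<le> c" "c < zs ! Suc k"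
    using strict_sorted_bracket_left[OF zs(1)] zs(4) ce(3) by blast
  have "zs ! Suc k \<in> region_vertices X a b"
    using zs(2) k(1) nth_mem by blast
  then have "e \<le> zs ! Suc k"
    using region_vertices_not_below[of "zs ! Suc k" X a b c e] ce k by force
  then show "ce \<in> (\<Union>k<N. arcs_within (zs ! k) (zs ! Suc k))"
    using ce k X zs(3) unfolding arcs_within_def by auto
next
  note zs = region_list[OF \<open>a \<le> b\<close> card_region, folded zs_def]
  fix ce
  assume "ce \<in> (\<Union>k<N. arcs_within (zs ! k) (zs ! Suc k))"
  then obtain k where "k < N" "ce \<in> arcs_within (zs ! k) (zs ! Suc k)"
    by blast
  moreover have "a \<le> zs ! k" "zs ! Suc k \<le> b"
    using strict_sorted_nth_le[OF zs(1), of 0 k] strict_sorted_nth_le[OF zs(1), of "Suc k" N]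
      zs(3-5) \<open>k < N\<close> by auto
  ultimately show "ce \<in> {(c, e) \<in> X. a \<le> c \<and> e \<le> b}"
    using gaps_in_X unfolding arcs_within_def zs_def by auto
qed

private lemma card_arcs_of_region:
  defines "zs \<equiv> region_list X a b"
  shows "card {(c, e) \<in> X. a \<le> c \<and> e \<le> b} = (\<Sum>k<N. card (arcs_within (zs ! k) (zs ! Suc k)))"
proof -
  note zs = region_list[OF \<open>a \<le> b\<close> card_region, folded zs_def]
  have "arcs_within (zs ! i) (zs ! Suc i) \<inter> arcs_within (zs ! j) (zs ! Suc j) = {}"
    if "i < j" "j < N" for i j
  proof -
    have "zs ! Suc i \<le> zs ! j"
      using strict_sorted_nth_le[OF zs(1), of "Suc i" j] zs(3) that by simp
    then show ?thesis
      unfolding arcs_within_def by (auto dest: arc_less)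
  qed
  then have "\<forall>i\<in>{..<N}. \<forall>j\<in>{..<N}. i \<noteq> j
      \<longrightarrow> arcs_within (zs ! i) (zs ! Suc i) \<inter> arcs_within (zs ! j) (zs ! Suc j) = {}"
    by (metis Int_commute lessThan_iff linorder_neqE_nat)
  then show ?thesis
    unfolding arcs_of_region_eq_Union[folded zs_def]
    by (intro card_UN_disjoint) (auto simp: finite_arcs_within)
qed

lemma region_width:
  fixes zs defines "zs \<equiv> region_list X a b"
  assumes "\<And>k. k < N \<Longrightarrow> zs ! Suc k - zs ! k = 1 + int m * int (card (arcs_within (zs ! k) (zs ! Suc k)))"
  shows "b - a = int N + int m * int (card {(c, e) \<in> X. a \<le> c \<and> e \<le> b})"
proof -
  note zs = region_list[OF \<open>a \<le> b\<close> card_region, folded zs_def]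
  have "b - a = (\<Sum>k<N. zs ! Suc k - zs ! k)"
    using sum_lessThan_telescope[of "\<lambda>k. zs ! k" N] zs(4,5) by simp
  also have "\<dots> = (\<Sum>k<N. 1 + int m * int (card (arcs_within (zs ! k) (zs ! Suc k))))"
    using assms by simp
  also have "\<dots> = int N + int m * int (card {(c, e) \<in> X. a \<le> c \<and> e \<le> b})"
    unfolding card_arcs_of_region[folded zs_def] by (simp add: sum.distrib sum_distrib_left)
  finally show ?thesis .
qed

end

text \<open>Besides its closing arc, every subgon below an arc has m + 1 edges, so each arc within
  [a, b] adds m to the width b - a.\<close>

lemma arc_width: "(a, b) \<in> L \<Longrightarrow> b - a = 1 + int m * int (card (arcs_within a b))"
proof (induction "nat (b - a)" arbitrary: a b rule: less_induct)
  case less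
  note ab = less.prems
  let ?zs = "below_list a b"
  have gaps_in: "arcs_within (?zs ! k) (?zs ! Suc k) \<subseteq> L - {(a, b)}" if "k < m + 1" for k
  proof -
    have "\<not> (?zs ! k \<le> a \<and> b \<le> ?zs ! Suc k)"
      using below_list_inner(3,4)[OF ab, of k] below_list_inner(3,4)[OF ab, of "Suc k"] that m_pos
      by (cases k) auto
    then show ?thesis
      unfolding arcs_within_def by auto
  qed
  have gap_width: "?zs ! Suc k - ?zs ! k = 1 + int m * int (card (arcs_within (?zs ! k) (?zs ! Suc k)))"
    if "k < m + 1" for k
  proof -
    have "?zs ! Suc k = ?zs ! k + 1 \<or> (?zs ! k, ?zs ! Suc k) \<in> L - {(a, b)}"
      using below_list_step[OF ab, of k] that by simp
    then show ?thesis
    proof (elim disjE)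
    assume "(?zs ! k, ?zs ! Suc k) \<in> L - {(a, b)}"
    moreover have "a \<le> ?zs ! k" "?zs ! Suc k \<le> b"
      using below_list_inner[OF ab] that by auto
    moreover have "?zs ! k < ?zs ! Suc k"
      using arc_less calculation(1) by blast
    ultimately have "nat (?zs ! Suc k - ?zs ! k) < nat (b - a)"
      by auto
    then show ?thesis
      using less.hyps \<open>(?zs ! k, ?zs ! Suc k) \<in> L - {(a, b)}\<close> by blast
  qed (simp add: arcs_within_short)
  qed
  have "b - a = int (m + 1) + int m * int (card {(c, e) \<in> L - {(a, b)}. a \<le> c \<and> e \<le> b})"
    using region_width[of "L - {(a, b)}" a b "m + 1"] gaps_in gap_width arc_less[OF ab]
      card_below_arc[OF ab] by auto
  moreover have "{(c, e) \<in> L - {(a, b)}. a \<le> c \<and> e \<le> b} = arcs_within a b - {(a, b)}"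
    unfolding arcs_within_def by auto
  moreover have "card (arcs_within a b) = Suc (card (arcs_within a b - {(a, b)}))"
    using ab finite_arcs_within by (intro card.remove) (auto simp: arcs_within_def)
  ultimately show ?case
    by (simp add: algebra_simps)
qed

lemma sector_width:
  assumes "consecutive p q"
  shows "q - p = int m + int m * int (card (arcs_within p q))"
proof -
  have "p \<le> q" and card: "card (region_vertices L p q) = Suc m"
    using assms card_between_spokes unfolding consecutive_def by auto
  have "sector_list p q ! Suc k - sector_list p q ! k
      = 1 + int m * int (card (arcs_within (sector_list p q ! k) (sector_list p q ! Suc k)))"
    if "k < m" for k
    using sector_list_step[OF assms that] arc_width by (auto simp: arcs_within_short)
  then have "q - p = int m + int m * int (card {(c, e) \<in> L. p \<le> c \<and> e \<le> q})"
    using region_width[OF _ \<open>p \<le> q\<close> card] unfolding arcs_within_def by auto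
  then show ?thesis
    unfolding arcs_within_def .
qed

lemma arcs_within_split:
  assumes "q \<in> P" "p \<le> q" "q \<le> p'"
  shows "arcs_within p p' = arcs_within p q \<union> arcs_within q p'"
    and "arcs_within p q \<inter> arcs_within q p' = {}"
proof -
  have "e \<le> q \<or> q \<le> c" if "(c, e) \<in> L" for c e
    using arc_spoke_noncrossing[OF that assms(1)] by linarith
  then show "arcs_within p p' = arcs_within p q \<union> arcs_within q p'"
    using assms(2,3) unfolding arcs_within_def by fastforce
  show "arcs_within p q \<inter> arcs_within q p' = {}"
    unfolding arcs_within_def by (auto dest: arc_less)
qed

lemma spokes_width:
  assumes "p \<in> P" "p' \<in> P" "p \<le> p'"
  shows "p' - p = int m * (int (card {r\<in>P. p \<le> r \<and> r < p'}) + int (card (arcs_within p p')))"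
  using assms
proof (induction "nat (p' - p)" arbitrary: p rule: less_induct)
  case less
  show ?case
  proof (cases "p = p'")
    case True
    then show ?thesis
      by (simp add: arcs_within_short)
  next
    case False
    define q where "q = next_spoke p"
    have pq: "consecutive p q"
      unfolding q_def using consecutive_next_spoke less.prems(1) .
    then have q: "q \<in> P" "p < q" "q \<le> p'"
      using next_spoke_le[of p p'] less.prems False unfolding q_def consecutive_def by auto
    have "{r\<in>P. p \<le> r \<and> r < p'} = insert p {r\<in>P. q \<le> r \<and> r < p'}"
      using pq q less.prems False unfolding consecutive_def by force
    moreover have "finite {r\<in>P. q \<le> r \<and> r < p'}"
      by (rule finite_subset[of _ "{q..<p'}"]) auto
    ultimately have "card {r\<in>P. p \<le> r \<and> r < p'} = Suc (card {r\<in>P. q \<le> r \<and> r < p'})"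
      using q by simp
    moreover have "card (arcs_within p p') = card (arcs_within p q) + card (arcs_within q p')"
      using arcs_within_split[of q p p'] q finite_arcs_within by (simp add: card_Un_disjoint)
    moreover have "p' - q = int m * (int (card {r\<in>P. q \<le> r \<and> r < p'}) + int (card (arcs_within q p')))"
      using less.hyps[of q] q less.prems(2) by simp
    ultimately show ?thesis
      using sector_width[OF pq] by (simp add: algebra_simps)
  qed
qed

lemma period_width:
  assumes "p \<in> P"
  shows "int n = int m * (int (card {r\<in>P. p \<le> r \<and> r < p + int n})
    + int (card (arcs_within p (p + int n))))"
  using spokes_width[OF assms, of "p + int n"] spokes_periodic[OF assms, of 1] by simp

end

section \<open>Friezes on a lifted angulation\<close>

definition lifted_corners :: "(int \<times> int) set \<Rightarrow> int set \<Rightarrow> int \<Rightarrow> nat" where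
  "lifted_corners L P x = 1 + (if x \<in> P then 1 else 0) + card {b. (x, b) \<in> L} + card {a. (a, x) \<in> L}"

locale lifted_frieze = lifted_angulation +
  fixes v :: "int \<Rightarrow> complex"
  assumes v_rec: "v (x + 1) + v (x - 1) = of_real (real (lifted_corners L P x) * lam m) * v x"
    and v_wedge: "wedge (v x) (v (x + 1)) = 1"
begin

definition F :: "int \<Rightarrow> int \<Rightarrow> real" where
  "F x y = wedge (v x) (v y)"

lemma F_self [simp]: "F x x = 0"
  by (simp add: F_def)

lemma F_Suc: "F x (x + 1) = 1"
  by (simp add: F_def v_wedge)

text \<open>Seen from its two ends, the subgon below an arc closes up like a regular (m+2)-gon.\<close>

definition arc_regular :: "int \<Rightarrow> int \<Rightarrow> bool" where
  "arc_regular a b \<longleftrightarrow> F a b = 1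
     \<and> v (below_list a b ! 1) - v b = of_real (lam m) * v a
     \<and> v (below_list a b ! m) - v a = of_real (lam m) * v b"

lemma fan_right:
  assumes "(x, r) \<in> L" "\<And>r'. (x, r') \<in> L \<Longrightarrow> r' \<le> r \<Longrightarrow> arc_regular x r'"
  shows "v (x + 1) - v r = of_real (real (card {r'. (x, r') \<in> L \<and> r' \<le> r}) * lam m) * v x"
  using assms
proof (induction "nat (r - x)" arbitrary: r rule: less_induct)
  case less
  let ?z = "below_list x r ! 1"
  have z: "x < ?z" "?z < r"
    using below_list_inner[OF less.prems(1), of 1] m_pos by auto
  have hidden: "r' \<le> ?z" if "(x, r') \<in> L" "r' < r" for r'
  proof (rule ccontr)
    assume "\<not> r' \<le> ?z"
    moreover have "?z \<in> region_vertices (L - {(x, r)}) x r"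
      using below_list(2,3)[OF less.prems(1)] nth_mem[of 1 "below_list x r"] by auto
    ultimately show False
      using region_vertices_not_below[of ?z _ x r x r'] that z by auto
  qed
  have closing: "v ?z - v r = of_real (lam m) * v x"
    using less.prems(2)[OF less.prems(1)] unfolding arc_regular_def by simp
  consider "?z = x + 1" | "(x, ?z) \<in> L"
    using below_list_step[OF less.prems(1), of 0] below_list(4)[OF less.prems(1)] by auto
  then show ?case
  proof cases
    case 1
    then have "{r'. (x, r') \<in> L \<and> r' \<le> r} = {r}"
      using hidden less.prems(1) arc_bounds by fastforce
    then show ?thesis
      using closing 1 by simp
  next
    case 2
    have "{r'. (x, r') \<in> L \<and> r' \<le> r} = insert r {r'. (x, r') \<in> L \<and> r' \<le> ?z}"
      using hidden less.prems(1) z by force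
    moreover have "finite {r'. (x, r') \<in> L \<and> r' \<le> ?z}"
      using finite_arcs_from[of x] by (rule finite_subset[rotated]) auto
    ultimately have "card {r'. (x, r') \<in> L \<and> r' \<le> r} = Suc (card {r'. (x, r') \<in> L \<and> r' \<le> ?z})"
      using z by simp
    moreover have "v (x + 1) - v ?z = of_real (real (card {r'. (x, r') \<in> L \<and> r' \<le> ?z}) * lam m) * v x"
      using less.hyps[OF _ 2] less.prems(2) z by simp
    ultimately show ?thesis
      using closing by (simp add: algebra_simps)
  qed
qed

lemma fan_left:
  assumes "(r, x) \<in> L" "\<And>r'. (r', x) \<in> L \<Longrightarrow> r \<le> r' \<Longrightarrow> arc_regular r' x"
  shows "v (x - 1) - v r = of_real (real (card {r'. (r', x) \<in> L \<and> r \<le> r'}) * lam m) * v x"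
  using assms
proof (induction "nat (x - r)" arbitrary: r rule: less_induct)
  case less
  let ?z = "below_list r x ! m"
  have z: "r < ?z" "?z < x"
    using below_list_inner[OF less.prems(1), of m] m_pos by auto
  have hidden: "?z \<le> r'" if "(r', x) \<in> L" "r < r'" for r'
  proof (rule ccontr)
    assume "\<not> ?z \<le> r'"
    moreover have "?z \<in> region_vertices (L - {(r, x)}) r x"
      using below_list(2,3)[OF less.prems(1)] nth_mem[of m "below_list r x"] by auto
    ultimately show False
      using region_vertices_not_below[of ?z _ r x r' x] that z by auto
  qed
  have closing: "v ?z - v r = of_real (lam m) * v x"
    using less.prems(2)[OF less.prems(1)] unfolding arc_regular_def by simp
  consider "x = ?z + 1" | "(?z, x) \<in> L"
    using below_list_step[OF less.prems(1), of m] below_list(5)[OF less.prems(1)] by auto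
  then show ?case
  proof cases
    case 1
    then have "{r'. (r', x) \<in> L \<and> r \<le> r'} = {r}"
      using hidden less.prems(1) arc_bounds by fastforce
    moreover have "x - 1 = ?z"
      using 1 by simp
    ultimately show ?thesis
      using closing by simp
  next
    case 2
    have "{r'. (r', x) \<in> L \<and> r \<le> r'} = insert r {r'. (r', x) \<in> L \<and> ?z \<le> r'}"
      using hidden less.prems(1) z by force
    moreover have "finite {r'. (r', x) \<in> L \<and> ?z \<le> r'}"
      using finite_arcs_to[of x] by (rule finite_subset[rotated]) auto
    ultimately have "card {r'. (r', x) \<in> L \<and> r \<le> r'} = Suc (card {r'. (r', x) \<in> L \<and> ?z \<le> r'})"
      using z by simp
    moreover have "v (x - 1) - v ?z = of_real (real (card {r'. (r', x) \<in> L \<and> ?z \<le> r'}) * lam m) * v x"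
      using less.hyps[OF _ 2] less.prems(2) z by simp
    ultimately show ?thesis
      using closing by (simp add: algebra_simps)
  qed
qed

lemma fan_right_all:
  assumes "\<And>r. (x, r) \<in> L \<Longrightarrow> r \<le> w" "w = x + 1 \<or> (x, w) \<in> L"
    "\<And>r. (x, r) \<in> L \<Longrightarrow> arc_regular x r"
  shows "v (x + 1) - v w = of_real (real (card {r. (x, r) \<in> L}) * lam m) * v x"
proof (cases "(x, w) \<in> L")
  case True
  moreover have "{r'. (x, r') \<in> L \<and> r' \<le> w} = {r. (x, r) \<in> L}"
    using assms(1) by auto
  ultimately show ?thesis
    using fan_right[of x w] assms(3) by simp
next
  case False
  then have "{r. (x, r) \<in> L} = {}"
    using assms(1,2) arc_bounds by fastforce
  then show ?thesis
    using False assms(2) by simp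
qed

lemma fan_left_all:
  assumes "\<And>r. (r, x) \<in> L \<Longrightarrow> u \<le> r" "x = u + 1 \<or> (u, x) \<in> L"
    "\<And>r. (r, x) \<in> L \<Longrightarrow> arc_regular r x"
  shows "v (x - 1) - v u = of_real (real (card {r. (r, x) \<in> L}) * lam m) * v x"
proof (cases "(u, x) \<in> L")
  case True
  moreover have "{r'. (r', x) \<in> L \<and> u \<le> r'} = {r. (r, x) \<in> L}"
    using assms(1) by auto
  ultimately show ?thesis
    using fan_left[of u x] assms(3) by simp
next
  case False
  then have "{r. (r, x) \<in> L} = {}"
    using assms(1,2) arc_bounds by fastforce
  then show ?thesis
    using False assms(2) by simp
qed

text \<open>The corners at x cut by arcs are exactly accounted for by the fans of arcs at x, so
  that the neighbours u and w of x in a subgon satisfy the recurrence of a regular polygon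
  (doubled at a spoke, which contributes two subgons).\<close>

lemma subgon_relation:
  assumes "\<And>r. (x, r) \<in> L \<Longrightarrow> r \<le> w" "w = x + 1 \<or> (x, w) \<in> L"
    "\<And>r. (x, r) \<in> L \<Longrightarrow> arc_regular x r"
    and "\<And>r. (r, x) \<in> L \<Longrightarrow> u \<le> r" "x = u + 1 \<or> (u, x) \<in> L"
    "\<And>r. (r, x) \<in> L \<Longrightarrow> arc_regular r x"
  shows "v u + v w = of_real ((if x \<in> P then 2 else 1) * lam m) * v x"
proof -
  have "v u + v w = (v (x + 1) + v (x - 1)) - (v (x + 1) - v w) - (v (x - 1) - v u)"
    by simp
  also have "\<dots> = of_real (real (lifted_corners L P x) * lam m) * v x
      - of_real (real (card {r. (x, r) \<in> L}) * lam m) * v x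
      - of_real (real (card {r. (r, x) \<in> L}) * lam m) * v x"
    by (simp only: v_rec fan_right_all[OF assms(1-3)] fan_left_all[OF assms(4-6)])
  also have "\<dots> = of_real ((if x \<in> P then 2 else 1) * lam m) * v x"
    by (simp add: lifted_corners_def algebra_simps)
  finally show ?thesis .
qed

lemma region_chain:
  assumes X: "X \<subseteq> L" and "a \<le> b" and card: "card (region_vertices X a b) = Suc N"
    and out_arcs: "\<And>x r. (x, r) \<in> L \<Longrightarrow> a < x \<Longrightarrow> x < b \<Longrightarrow> (x, r) \<in> X \<and> r \<le> b"
    and in_arcs: "\<And>r x. (r, x) \<in> L \<Longrightarrow> a < x \<Longrightarrow> x < b \<Longrightarrow> (r, x) \<in> X \<and> a \<le> r"
    and no_spokes: "\<And>x. a < x \<Longrightarrow> x < b \<Longrightarrow> x \<notin> P"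
    and regular: "\<And>c e. (c, e) \<in> X \<Longrightarrow> a \<le> c \<Longrightarrow> e \<le> b \<Longrightarrow> arc_regular c e"
  shows "chain_rec (lam m) (Suc N) (\<lambda>k. v (region_list X a b ! k))"
  unfolding chain_rec_def
proof (intro allI impI)
  fix k
  assume k: "Suc (Suc k) < Suc N"
  let ?zs = "region_list X a b"
  let ?u = "?zs ! k" and ?x = "?zs ! Suc k" and ?w = "?zs ! Suc (Suc k)"
  note zs = region_list[OF \<open>a \<le> b\<close> card]
  have nc: "noncrossing_arcs X"
    using arcs_noncrossing X unfolding noncrossing_arcs_def by blast
  have x: "a < ?x" "?x < b" "a \<le> ?u" "?w \<le> b"
    using sorted_wrt_nth_less[OF zs(1), of 0 "Suc k"] sorted_wrt_nth_less[OF zs(1), of "Suc k" N]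
      strict_sorted_nth_le[OF zs(1), of 0 k] strict_sorted_nth_le[OF zs(1), of "Suc (Suc k)" N]
      zs(3-5) k by auto
  have "?w = ?x + 1 \<or> (?x, ?w) \<in> L" "?x = ?u + 1 \<or> (?u, ?x) \<in> L"
    using region_list_step[OF nc \<open>a \<le> b\<close> card, of "Suc k"]
      region_list_step[OF nc \<open>a \<le> b\<close> card, of k] X k by auto
  moreover have "r \<le> ?w" if "(?x, r) \<in> L" for r
    using region_list_arc_from[OF \<open>a \<le> b\<close> card, of "Suc k" r] out_arcs[OF that] x k by auto
  moreover have "?u \<le> r" if "(r, ?x) \<in> L" for r
    using region_list_arc_to[OF \<open>a \<le> b\<close> card, of "Suc k" r] in_arcs[OF that] x k by auto
  moreover have "arc_regular ?x r" if "(?x, r) \<in> L" for r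
    using regular out_arcs[OF that] x by auto
  moreover have "arc_regular r ?x" if "(r, ?x) \<in> L" for r
    using regular in_arcs[OF that] x by auto
  ultimately have "v ?u + v ?w = of_real ((if ?x \<in> P then 2 else 1) * lam m) * v ?x"
    by (intro subgon_relation) auto
  then show "v ?u + v ?w = of_real (lam m) * v ?x"
    using no_spokes[OF x(1,2)] by simp
qed

lemma below_list_chain:
  assumes ab: "(a, b) \<in> L"
    and nested: "\<And>c e. (c, e) \<in> L - {(a, b)} \<Longrightarrow> a \<le> c \<Longrightarrow> e \<le> b \<Longrightarrow> arc_regular c e"
  shows "chain_rec (lam m) (m + 2) (\<lambda>k. v (below_list a b ! k))"
proof -
  have "r \<le> b" if "(x, r) \<in> L" "a < x" "x < b" for x r
    using arcs_not_crossing[OF ab that(1)] that(2,3) by linarith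
  moreover have "a \<le> r" if "(r, x) \<in> L" "a < x" "x < b" for r x
    using arcs_not_crossing[OF that(1) ab] that(2,3) by linarith
  ultimately show ?thesis
    using region_chain[of "L - {(a, b)}" a b "m + 1"] nested arc_less[OF ab] card_below_arc[OF ab]
      arc_spoke_noncrossing[OF ab] by fastforce
qed

lemma below_list_F:
  assumes ab: "(a, b) \<in> L"
    and nested: "\<And>c e. (c, e) \<in> L - {(a, b)} \<Longrightarrow> a \<le> c \<Longrightarrow> e \<le> b \<Longrightarrow> arc_regular c e"
    and "i \<le> j" "j \<le> m + 1"
  shows "F (below_list a b ! i) (below_list a b ! j) = cheb (lam m) (j - i)"
proof -
  let ?zs = "below_list a b"
  have "F a (?zs ! 1) = 1"
    using below_list_step[OF ab, of 0] below_list(4)[OF ab] below_list_inner[OF ab, of 1] m_pos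
      nested[of a "?zs ! 1"] F_Suc unfolding arc_regular_def by force
  then have "wedge (v (?zs ! 0)) (v (?zs ! 1)) = 1"
    using below_list(4)[OF ab] by (simp add: F_def)
  then show ?thesis
    using chain_rec_wedge[OF below_list_chain[OF ab nested]] assms(3,4) by (simp add: F_def)
qed

lemma arc_regular_all: "(a, b) \<in> L \<Longrightarrow> arc_regular a b"
proof (induction "nat (b - a)" arbitrary: a b rule: less_induct)
  case less
  note ab = less.prems
  let ?zs = "below_list a b"
  have nested: "arc_regular c e" if "(c, e) \<in> L - {(a, b)}" "a \<le> c" "e \<le> b" for c e
    using less.hyps[of e c] that arc_less[of c e] by force
  note chain = below_list_chain[OF ab nested]
  have "F a b = 1"
    using below_list_F[OF ab nested, of 0 "m + 1"] below_list(4,5)[OF ab] cheb_lam_Suc_m by simp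
  moreover have vb: "v b = v (?zs ! 1) - of_real (lam m) * v a"
    using chain_rec_expand_0[OF chain, of "m + 1"] below_list(4,5)[OF ab]
    by (simp add: cheb_lam_Suc_m cheb_lam_m)
  moreover have "v (?zs ! m) - v a = of_real (lam m) * v b"
  proof -
    have "v (?zs ! m) = of_real (lam m) * v (?zs ! 1) - of_real ((lam m)\<^sup>2 - 1) * v a"
      using chain_rec_expand_0[OF chain, of m] below_list(4)[OF ab] m_pos cheb_lam_pred_m[OF m_pos]
      by (simp add: cheb_lam_m)
    then show ?thesis
      unfolding vb by (simp add: algebra_simps power2_eq_square)
  qed
  ultimately show ?case
    unfolding arc_regular_def by simp
qed

lemma F_arc: "(a, b) \<in> L \<Longrightarrow> F a b = 1"
  using arc_regular_all unfolding arc_regular_def by blast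

lemma below_list_F_all:
  "(a, b) \<in> L \<Longrightarrow> i \<le> j \<Longrightarrow> j \<le> m + 1
    \<Longrightarrow> F (below_list a b ! i) (below_list a b ! j) = cheb (lam m) (j - i)"
  using below_list_F arc_regular_all by blast

lemma sector_chain:
  assumes "consecutive p q"
  shows "chain_rec (lam m) (m + 1) (\<lambda>k. v (sector_list p q ! k))"
proof -
  have pq: "p \<in> P" "q \<in> P" "p \<le> q" and card: "card (region_vertices L p q) = Suc m"
    using assms card_between_spokes unfolding consecutive_def by auto
  have "r \<le> q" if "(x, r) \<in> L" "x < q" for x r
    using arc_spoke_noncrossing[OF that(1) pq(2)] that(2) by linarith
  moreover have "p \<le> r" if "(r, x) \<in> L" "p < x" for r x
    using arc_spoke_noncrossing[OF that(1) pq(1)] that(2) by linarith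
  moreover have "x \<notin> P" if "p < x" "x < q" for x
    using assms that unfolding consecutive_def by blast
  ultimately show ?thesis
    using region_chain[OF _ pq(3) card] arc_regular_all by simp
qed

lemma sector_F_first:
  assumes "consecutive p q"
  shows "F p (sector_list p q ! 1) = 1"
  using sector_list_step[OF assms, of 0] sector_list(4)[OF assms] m_pos F_Suc F_arc by auto

lemma sector_F:
  assumes "consecutive p q" "i \<le> j" "j \<le> m"
  shows "F (sector_list p q ! i) (sector_list p q ! j) = cheb (lam m) (j - i)"
  using chain_rec_wedge[OF sector_chain[OF assms(1)]] sector_F_first[OF assms(1)]
    sector_list(4)[OF assms(1)] assms(2,3) by (simp add: F_def)

lemma F_consecutive: "consecutive p q \<Longrightarrow> F p q = lam m"
  using sector_F[of p q 0 m] sector_list(4,5) cheb_lam_m by simp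

lemma sector_expand:
  assumes "consecutive p q" "1 \<le> k" "k \<le> m"
  shows "v (sector_list p q ! k)
    = of_real (cheb (lam m) k) * v (sector_list p q ! 1) - of_real (cheb (lam m) (k - 1)) * v p"
  using chain_rec_expand_0[OF sector_chain[OF assms(1)], of k] sector_list(4)[OF assms(1)] assms(2,3)
  by simp

lemma spoke_relation:
  assumes pq: "consecutive p q" and qq': "consecutive q q'"
  shows "v (sector_list p q ! (m - 1)) + v (sector_list q q' ! 1) = of_real (2 * lam m) * v q"
proof -
  let ?u = "sector_list p q ! (m - 1)" and ?w = "sector_list q q' ! 1"
  have P: "p \<in> P" "q \<in> P" "q' \<in> P" "p \<le> q" "q \<le> q'" "p < q" "q < q'"
    and card: "card (region_vertices L p q) = Suc m" "card (region_vertices L q q') = Suc m"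
    using pq qq' card_between_spokes unfolding consecutive_def by auto
  have "r \<le> ?w" if "(q, r) \<in> L" for r
  proof -
    have "r \<le> q'"
      using arc_spoke_noncrossing[OF that P(3)] arc_less[OF that] P(7) by linarith
    moreover have "(sector_list q q' ! 0, r) \<in> L"
      using that sector_list(4)[OF qq'] by simp
    ultimately show ?thesis
      using region_list_arc_from[OF P(5) card(2) m_pos] by simp
  qed
  moreover have "?u \<le> r" if "(r, q) \<in> L" for r
  proof -
    have "p \<le> r"
      using arc_spoke_noncrossing[OF that P(1)] arc_less[OF that] P(6) by linarith
    moreover have "(r, sector_list p q ! m) \<in> L"
      using that sector_list(5)[OF pq] by simp
    ultimately show ?thesis
      using region_list_arc_to[OF P(4) card(1) m_pos] by simp
  qed
  moreover have "?w = q + 1 \<or> (q, ?w) \<in> L"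
    using sector_list_step[OF qq', of 0] sector_list(4)[OF qq'] m_pos by simp
  moreover have "q = ?u + 1 \<or> (?u, q) \<in> L"
    using sector_list_step[OF pq, of "m - 1"] sector_list(5)[OF pq] m_pos by simp
  ultimately show ?thesis
    using subgon_relation[of q ?w ?u] arc_regular_all P(2) by (simp add: add.commute)
qed

lemma sector_ends:
  assumes "consecutive p q"
  shows "of_real (lam m) * v q - v (sector_list p q ! (m - 1))
    = v (sector_list p q ! 1) - of_real (lam m) * v p"
proof (cases "m = 1")
  case True
  then show ?thesis
    using sector_list(4,5)[OF assms] lam_1 by simp
next
  case False
  let ?y = "v (sector_list p q ! 1)" and ?l = "lam m"
  have m: "2 \<le> m"
    using False m_pos by simp
  have "cheb ?l m = ?l * cheb ?l (m - 1) - cheb ?l (m - 2)"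
    using cheb.simps(3)[of ?l "m - 2"] m by (simp add: Suc_diff_Suc numeral_2_eq_2)
  then have c: "cheb ?l (m - 2) = ?l * (?l\<^sup>2 - 1) - ?l"
    using cheb_lam_m cheb_lam_pred_m[OF m_pos] by simp
  have "v (sector_list p q ! (m - 1)) = of_real (cheb ?l (m - 1)) * ?y - of_real (cheb ?l (m - 2)) * v p"
    using sector_expand[OF assms, of "m - 1"] m by (simp add: numeral_2_eq_2)
  then have u: "v (sector_list p q ! (m - 1)) = of_real (?l\<^sup>2 - 1) * ?y - of_real (?l * (?l\<^sup>2 - 1) - ?l) * v p"
    unfolding c cheb_lam_pred_m[OF m_pos] .
  have vq: "v q = of_real ?l * ?y - of_real (?l\<^sup>2 - 1) * v p"
    using sector_expand[OF assms, of m] sector_list(5)[OF assms] cheb_lam_pred_m[OF m_pos] m_pos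
    by (simp add: cheb_lam_m)
  show ?thesis
    unfolding u vq by (simp add: algebra_simps power2_eq_square)
qed

text \<open>Between consecutive spokes v advances by lam m times a vector that does not change from
  one spoke to the next, so v is an arithmetic progression along the spokes.\<close>

definition spoke_step :: "int \<Rightarrow> complex" where
  "spoke_step p = v (sector_list p (next_spoke p) ! 1) - of_real (lam m) * v p"

lemma spoke_step_consecutive:
  assumes pq: "consecutive p q"
  shows "spoke_step q = spoke_step p" "v q = v p + of_real (lam m) * spoke_step p"
    "wedge (v p) (spoke_step p) = 1"
proof -
  have "q \<in> P"
    using pq unfolding consecutive_def by simp
  then have qq': "consecutive q (next_spoke q)"
    by (rule consecutive_next_spoke)
  have step_p: "spoke_step p = v (sector_list p q ! 1) - of_real (lam m) * v p"
    unfolding spoke_step_def next_spoke_eq[OF pq] ..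
  have step_q: "spoke_step q = v (sector_list q (next_spoke q) ! 1) - of_real (lam m) * v q"
    unfolding spoke_step_def ..
  have z: "v (sector_list q (next_spoke q) ! 1)
      = of_real (2 * lam m) * v q - v (sector_list p q ! (m - 1))"
    using spoke_relation[OF pq qq'] by (simp add: algebra_simps)
  have u: "v (sector_list p q ! (m - 1))
      = of_real (lam m) * v q - v (sector_list p q ! 1) + of_real (lam m) * v p"
    using sector_ends[OF pq] by (simp add: algebra_simps)
  show "spoke_step q = spoke_step p"
    unfolding step_p step_q z u by (simp add: algebra_simps)
  have "v q = of_real (lam m) * v (sector_list p q ! 1) - of_real ((lam m)\<^sup>2 - 1) * v p"
    using sector_expand[OF pq, of m] sector_list(5)[OF pq] m_pos cheb_lam_pred_m[OF m_pos]
    by (simp add: cheb_lam_m)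
  then show "v q = v p + of_real (lam m) * spoke_step p"
    unfolding step_p by (simp add: algebra_simps power2_eq_square)
  show "wedge (v p) (spoke_step p) = 1"
    using sector_F_first[OF pq] unfolding step_p by (simp add: F_def)
qed

lemma spoke_progression:
  assumes "p \<in> P" "p' \<in> P" "p \<le> p'"
  shows "\<exists>t. 0 \<le> t \<and> (p < p' \<longrightarrow> lam m \<le> t) \<and> v p' = v p + of_real t * spoke_step p
    \<and> spoke_step p' = spoke_step p"
  using assms
proof (induction "nat (p' - p)" arbitrary: p rule: less_induct)
  case less
  show ?case
  proof (cases "p = p'")
    case True
    then show ?thesis
      by (intro exI[of _ 0]) simp
  next
    case False
    define q where "q = next_spoke p"
    have pq: "consecutive p q"
      unfolding q_def using consecutive_next_spoke less.prems(1) .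
    then have q: "q \<in> P" "p < q" "q \<le> p'"
      using next_spoke_le[of p p'] less.prems False unfolding q_def consecutive_def by auto
    then obtain t where "0 \<le> t" "v p' = v q + of_real t * spoke_step q" "spoke_step p' = spoke_step q"
      using less.hyps[of q] less.prems(2) by auto
    then show ?thesis
      using spoke_step_consecutive[OF pq] lam_ge_1[OF m_pos]
      by (intro exI[of _ "lam m + t"]) (auto simp: algebra_simps)
  qed
qed

lemma F_spokes:
  assumes "p \<in> P" "q \<in> P" "r \<in> P" "p \<le> q" "q \<le> r"
  shows "0 \<le> F p q" "p < q \<Longrightarrow> lam m \<le> F p q" "F p r = F p q + F q r"
proof -
  obtain s where s: "0 \<le> s" "p < q \<longrightarrow> lam m \<le> s" "v q = v p + of_real s * spoke_step p"
    using spoke_progression[OF assms(1,2,4)] by blast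
  obtain t where t: "v r = v p + of_real t * spoke_step p"
    using spoke_progression[OF assms(1,3)] assms(4,5) by fastforce
  have unimodular: "wedge (v p) (spoke_step p) = 1"
    using spoke_step_consecutive(3)[OF consecutive_next_spoke[OF assms(1)]] .
  then have "F p q = s" "F p r = t" "F q r = t - s"
    unfolding F_def s(3) t using wedge_antisym[of "spoke_step p" "v p"] by (simp_all add: algebra_simps)
  then show "0 \<le> F p q" "p < q \<Longrightarrow> lam m \<le> F p q" "F p r = F p q + F q r"
    using s by simp_all
qed

lemma F_bilinear_expand:
  "F a b * F c d * F x y = F x b * F y d * F a c + F x b * F c y * F a d + F a x * F y d * F b c
    + F a x * F c y * F b d"
proof -
  have "F a b * F c d * F x y = wedge (of_real (F a b) * v x) (of_real (F c d) * v y)"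
    unfolding F_def by simp
  also have "\<dots> = wedge (of_real (F x b) * v a + of_real (F a x) * v b)
      (of_real (F y d) * v c + of_real (F c y) * v d)"
    unfolding F_def cramer[of "v a" "v b" "v x"] cramer[of "v c" "v d" "v y"] ..
  also have "\<dots> = F x b * F y d * F a c + F x b * F c y * F a d + F a x * F y d * F b c
      + F a x * F c y * F b d"
    unfolding wedge_add_left wedge_add_right wedge_scale_left wedge_scale_right
    by (simp add: F_def[symmetric] algebra_simps)
  finally show ?thesis .
qed

definition positive_on :: "int \<Rightarrow> int \<Rightarrow> bool" where
  "positive_on a b \<longleftrightarrow> (\<forall>x y. a \<le> x \<longrightarrow> x < y \<longrightarrow> y \<le> b
     \<longrightarrow> 1 \<le> F x y \<and> (F x y = 1 \<longrightarrow> y = x + 1 \<or> (x, y) \<in> L))"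

lemma positive_on_Suc: "positive_on a (a + 1)"
  unfolding positive_on_def
proof (intro allI impI)
  fix x y
  assume "a \<le> x" "x < y" "y \<le> a + 1"
  then have "x = a" "y = a + 1"
    by linarith+
  then show "1 \<le> F x y \<and> (F x y = 1 \<longrightarrow> y = x + 1 \<or> (x, y) \<in> L)"
    using F_Suc by simp
qed

lemma positive_on_coefficients:
  assumes "positive_on a b" "a \<le> x" "x \<le> b"
  shows "0 \<le> F a x" "0 \<le> F x b" "a < x \<Longrightarrow> 1 \<le> F a x" "x < b \<Longrightarrow> 1 \<le> F x b"
proof -
  have "a < x \<Longrightarrow> 1 \<le> F a x" "x < b \<Longrightarrow> 1 \<le> F x b"
    using assms unfolding positive_on_def by auto
  moreover have "x = a \<or> a < x" "x = b \<or> x < b"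
    using assms(2,3) by auto
  ultimately show "0 \<le> F a x" "0 \<le> F x b" "a < x \<Longrightarrow> 1 \<le> F a x" "x < b \<Longrightarrow> 1 \<le> F x b"
    by auto
qed

lemma ge_mult_ge_1: "1 \<le> u \<Longrightarrow> 1 \<le> w \<Longrightarrow> 0 \<le> B \<Longrightarrow> B \<le> u * w * (B :: real)"
  using mult_mono[of 1 u 1 w] mult_right_mono[of 1 "u * w" B] by simp

definition positive_edge :: "int \<Rightarrow> int \<Rightarrow> bool" where
  "positive_edge a b \<longleftrightarrow> (b = a + 1 \<or> (a, b) \<in> L) \<and> positive_on a b"

text \<open>Expanding v x and v y in the unimodular bases (v a, v b) and (v c, v d) writes F x y as a
  nonnegative combination of the values of F at the corners.\<close>

lemma F_across_edges:
  assumes ab: "positive_edge a b" and cd: "positive_edge c d"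
    and "a \<le> x" "x < b" "b \<le> c" "c < y" "y \<le> d"
    and "0 \<le> F a c" "0 \<le> F a d" "0 \<le> F b c" "0 \<le> F b d"
  shows "F a d \<le> F x y" "x \<noteq> a \<Longrightarrow> F a d + F b d \<le> F x y" "y \<noteq> d \<Longrightarrow> F a d + F a c \<le> F x y"
proof -
  have pos: "positive_on a b" "positive_on c d" and "F a b = 1" "F c d = 1"
    using ab cd F_Suc F_arc unfolding positive_edge_def by auto
  note coeffs_x = positive_on_coefficients[OF pos(1) \<open>a \<le> x\<close> order.strict_implies_order[OF \<open>x < b\<close>]]
  note coeffs_y = positive_on_coefficients[OF pos(2) order.strict_implies_order[OF \<open>c < y\<close>] \<open>y \<le> d\<close>]
  have expand: "F x y = F x b * F y d * F a c + F x b * F c y * F a d + F a x * F y d * F b c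
      + F a x * F c y * F b d"
    using F_bilinear_expand[of a b c d x y] \<open>F a b = 1\<close> \<open>F c d = 1\<close> by simp
  have outer: "F a d \<le> F x b * F c y * F a d"
    using ge_mult_ge_1 coeffs_x(4) coeffs_y(3) assms by simp
  have terms: "0 \<le> F x b * F y d * F a c" "0 \<le> F a x * F y d * F b c" "0 \<le> F a x * F c y * F b d"
    using coeffs_x(1,2) coeffs_y(1,2) assms by simp_all
  show "F a d \<le> F x y"
    using expand outer terms by linarith
  show "F a d + F b d \<le> F x y" if "x \<noteq> a"
  proof -
    have "F b d \<le> F a x * F c y * F b d"
      using ge_mult_ge_1 coeffs_x(3) coeffs_y(3) that assms by simp
    then show ?thesis
      using expand outer terms by linarith
  qed
  show "F a d + F a c \<le> F x y" if "y \<noteq> d"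
  proof -
    have "F a c \<le> F x b * F y d * F a c"
      using ge_mult_ge_1 coeffs_x(4) coeffs_y(4) that assms by simp
    then show ?thesis
      using expand outer terms by linarith
  qed
qed

context
  fixes zs :: "int list" and N :: nat
  assumes ss: "sorted_wrt (<) zs" and len: "length zs = Suc N" and N: "1 \<le> N" "N \<le> m + 1"
    and F_zs: "\<And>i j. i \<le> j \<Longrightarrow> j \<le> N \<Longrightarrow> F (zs ! i) (zs ! j) = cheb (lam m) (j - i)"
    and edges: "\<And>k. k < N \<Longrightarrow> positive_edge (zs ! k) (zs ! Suc k)"
begin

lemma region_positive_across:
  assumes kl: "Suc k < l" "l \<le> N"
    and x: "zs ! k \<le> x" "x < zs ! Suc k" and y: "zs ! (l - 1) < y" "y \<le> zs ! l"
  shows "1 \<le> F x y \<and> (F x y = 1 \<longrightarrow> x = zs ! 0 \<and> y = zs ! N \<and> N = m + 1)"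
proof -
  let ?a = "zs ! k" and ?b = "zs ! Suc k" and ?c = "zs ! (l - 1)" and ?d = "zs ! l"
  have corners: "F ?a ?c = cheb (lam m) (l - Suc k)" "F ?a ?d = cheb (lam m) (l - k)"
    "F ?b ?c = cheb (lam m) (l - Suc (Suc k))" "F ?b ?d = cheb (lam m) (l - Suc k)"
    using F_zs kl by auto
  have "0 \<le> F ?a ?c" "0 \<le> F ?a ?d" "0 \<le> F ?b ?c" "0 \<le> F ?b ?d"
    unfolding corners using kl N by (simp_all add: cheb_lam_nonneg)
  moreover have "positive_edge ?a ?b" "positive_edge ?c ?d"
    using edges[of k] edges[of "l - 1"] kl by simp_all
  ultimately have across: "F ?a ?d \<le> F x y" "x \<noteq> ?a \<Longrightarrow> F ?a ?d + F ?b ?d \<le> F x y"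
    "y \<noteq> ?d \<Longrightarrow> F ?a ?d + F ?a ?c \<le> F x y"
    using F_across_edges[of ?a ?b ?c ?d x y] strict_sorted_nth_le[OF ss, of "Suc k" "l - 1"]
      kl len x y by simp_all
  show ?thesis
  proof (cases "l - k \<le> m")
    case True
    moreover have "2 \<le> l - k"
      using kl by simp
    ultimately have "1 < F x y"
      using across(1) corners(2) cheb_lam_gt_1[of "l - k" m] by simp
    then show ?thesis
      by simp
  next
    case False
    then have "k = 0" "l = N" "N = m + 1" "l - Suc k = m"
      using kl N(2) by auto
    moreover have "F ?a ?c = lam m" "F ?b ?d = lam m"
      using corners cheb_lam_m calculation(4) by simp_all
    ultimately show ?thesis
      using across corners(2) cheb_lam_Suc_m lam_ge_1[OF m_pos] by force
  qed
qed

text \<open>Positivity propagates from the edges of a subgon, on which the frieze is already known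
  to be positive, to the whole polygon; the closing diagonal of an (m+2)-gon is the only
  diagonal on which F can take the value 1.\<close>

lemma region_positive:
  assumes "zs ! 0 \<le> x" "x < y" "y \<le> zs ! N"
  shows "1 \<le> F x y \<and> (F x y = 1 \<longrightarrow> y = x + 1 \<or> (x, y) \<in> L \<or> (x = zs ! 0 \<and> y = zs ! N \<and> N = m + 1))"
proof -
  obtain k where k: "Suc k < length zs" "zs ! k \<le> x" "x < zs ! Suc k"
    using strict_sorted_bracket_left[OF ss, of x] len N assms by auto
  show ?thesis
  proof (cases "y \<le> zs ! Suc k")
    case True
    then show ?thesis
      using edges[of k] k assms(2) len unfolding positive_edge_def positive_on_def by auto
  next
    case False
    obtain l where l: "0 < l" "l < length zs" "zs ! (l - 1) < y" "y \<le> zs ! l"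
      using strict_sorted_bracket_right[OF ss, of y] len N assms k(2) by auto
    have "Suc k < l"
      using False l(4) strict_sorted_nth_le[OF ss, of l "Suc k"] k(1) by (cases "l \<le> Suc k") auto
    moreover have "l \<le> N"
      using l(2) len by simp
    ultimately show ?thesis
      using region_positive_across[of k l x y] k(2,3) l(3,4) by blast
  qed
qed

end

lemma arc_positive: "(a, b) \<in> L \<Longrightarrow> positive_on a b"
proof (induction "nat (b - a)" arbitrary: a b rule: less_induct)
  case less
  note ab = less.prems
  let ?zs = "below_list a b"
  have "positive_edge (?zs ! k) (?zs ! Suc k)" if "k < m + 1" for k
  proof -
    have "?zs ! Suc k = ?zs ! k + 1 \<or> (?zs ! k, ?zs ! Suc k) \<in> L - {(a, b)}"
      using below_list_step[OF ab, of k] that by simp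
    moreover have "a \<le> ?zs ! k" "?zs ! Suc k \<le> b"
      using below_list_inner[OF ab] that by auto
    moreover have "nat (e - c) < nat (b - a)" if "(c, e) \<in> L - {(a, b)}" "a \<le> c" "e \<le> b" for c e
      using that arc_less[of c e] by force
    ultimately show ?thesis
      unfolding positive_edge_def using less.hyps positive_on_Suc by fastforce
  qed
  then have "1 \<le> F x y \<and> (F x y = 1 \<longrightarrow> y = x + 1 \<or> (x, y) \<in> L \<or> (x = a \<and> y = b \<and> m + 1 = m + 1))"
    if "a \<le> x" "x < y" "y \<le> b" for x y
    using region_positive[OF below_list(1)[OF ab], of "m + 1" x y] below_list(3-5)[OF ab]
      below_list_F_all[OF ab] that by simp
  then show ?case
    unfolding positive_on_def using ab by blast
qed

lemma sector_positive:
  assumes "consecutive p q"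
  shows "positive_on p q"
proof -
  have "positive_edge (sector_list p q ! k) (sector_list p q ! Suc k)" if "k < m" for k
    using sector_list_step[OF assms that] arc_positive positive_on_Suc
    unfolding positive_edge_def by auto
  then have "1 \<le> F x y \<and> (F x y = 1 \<longrightarrow> y = x + 1 \<or> (x, y) \<in> L \<or> (x = p \<and> y = q \<and> m = m + 1))"
    if "p \<le> x" "x < y" "y \<le> q" for x y
    using region_positive[OF sector_list(1)[OF assms], of m x y] sector_list(3-5)[OF assms]
      sector_F[OF assms] m_pos that by simp
  then show ?thesis
    unfolding positive_on_def by simp
qed

text \<open>Across a spoke, F grows like the frieze of the spokes themselves, which is an arithmetic
  progression with step lam m; two steps already exceed 1 since lam m < 2.\<close>

lemma F_across_spokes:
  assumes pq: "consecutive p q" and pq': "consecutive p' q'"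
    and "p \<le> x" "x < q" "q \<le> p'" "p' < y" "y \<le> q'"
  shows "1 < F x y"
proof -
  have P: "p \<in> P" "q \<in> P" "p' \<in> P" "q' \<in> P" "p < q" "p' < q'"
    using pq pq' unfolding consecutive_def by auto
  note coeffs_x = positive_on_coefficients[OF sector_positive[OF pq] \<open>p \<le> x\<close>]
  note coeffs_y = positive_on_coefficients[OF sector_positive[OF pq'] _ \<open>y \<le> q'\<close>]
  have lam: "0 < lam m" "lam m < 2"
    using lam_ge_1[OF m_pos] lam_less_2 by auto
  have spokes: "0 \<le> F p p'" "0 \<le> F q p'" "lam m \<le> F q q'" "F p q' = F p q + F q q'"
    "lam m \<le> F p q"
    using F_spokes[of p p' p'] F_spokes[of q p' p'] F_spokes[of q q' q'] F_spokes[of p q q']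
      F_spokes[of p q q] P assms(3-7) by auto
  have "lam m * lam m * F x y = F x q * F y q' * F p p' + F x q * F p' y * F p q'
      + F p x * F y q' * F q p' + F p x * F p' y * F q q'"
    using F_bilinear_expand[of p q p' q' x y] F_consecutive[OF pq] F_consecutive[OF pq'] by simp
  moreover have "F p q' \<le> F x q * F p' y * F p q'"
    using ge_mult_ge_1 coeffs_x(4) coeffs_y(3) spokes lam assms by simp
  moreover have "0 \<le> F x q * F y q' * F p p'" "0 \<le> F p x * F y q' * F q p'"
    "0 \<le> F p x * F p' y * F q q'"
    using coeffs_x(1,2) coeffs_y(1,2) spokes lam assms by simp_all
  ultimately have "2 * lam m \<le> lam m * lam m * F x y"
    using spokes by linarith
  then have "2 \<le> lam m * F x y"
    using lam by (simp add: mult.assoc)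
  show ?thesis
  proof (rule ccontr)
    assume "\<not> 1 < F x y"
    then have "lam m * F x y \<le> lam m * 1"
      using lam by (intro mult_left_mono) auto
    then show False
      using \<open>2 \<le> lam m * F x y\<close> lam by linarith
  qed
qed

theorem F_ge_1:
  assumes "x < y"
  shows "1 \<le> F x y" "F x y = 1 \<Longrightarrow> y = x + 1 \<or> (x, y) \<in> L"
proof -
  have "1 \<le> F x y \<and> (F x y = 1 \<longrightarrow> y = x + 1 \<or> (x, y) \<in> L)"
  proof (cases "\<exists>r\<in>P. x < r \<and> r < y")
    case False
    then obtain p q where "consecutive p q" "p \<le> x" "y \<le> q"
      using consecutive_around[OF assms] by blast
    then show ?thesis
      using sector_positive assms unfolding positive_on_def by blast
  next
    case True
    then obtain r where r: "r \<in> P" "x < r" "r < y"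
      by blast
    obtain p q where pq: "consecutive p q" "p \<le> x" "x + 1 \<le> q"
      using consecutive_around[of x "x + 1"] by auto
    obtain p' q' where pq': "consecutive p' q'" "p' \<le> y - 1" "y \<le> q'"
      using consecutive_around[of "y - 1" y] by auto
    have "q \<le> r" "r \<le> p'"
      using pq pq' r unfolding consecutive_def by force+
    then show ?thesis
      using F_across_spokes[OF pq(1) pq'(1)] pq pq' by force
  qed
  then show "1 \<le> F x y" "F x y = 1 \<Longrightarrow> y = x + 1 \<or> (x, y) \<in> L"
    by auto
qed

corollary F_eq_1_iff: "x + 2 \<le> y \<Longrightarrow> F x y = 1 \<longleftrightarrow> (x, y) \<in> L"
  using F_ge_1[of x y] F_arc by force

end

section \<open>A solution of the frieze recurrence\<close>

text \<open>The solution with v 0 = 1 and v 1 = i, computed forwards and backwards as pairs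
  of consecutive values.\<close>

fun sol_up :: "(int \<Rightarrow> real) \<Rightarrow> nat \<Rightarrow> complex \<times> complex" where
  "sol_up a 0 = (1, \<i>)"
| "sol_up a (Suc k) = (snd (sol_up a k), of_real (a (int k + 1)) * snd (sol_up a k) - fst (sol_up a k))"

fun sol_down :: "(int \<Rightarrow> real) \<Rightarrow> nat \<Rightarrow> complex \<times> complex" where
  "sol_down a 0 = (1, \<i>)"
| "sol_down a (Suc k) = (of_real (a (- int k)) * fst (sol_down a k) - snd (sol_down a k), fst (sol_down a k))"

definition sol :: "(int \<Rightarrow> real) \<Rightarrow> int \<Rightarrow> complex" where
  "sol a x = (if 0 \<le> x then fst (sol_up a (nat x)) else fst (sol_down a (nat (- x))))"

lemma sol_nonneg: "sol a (int k) = fst (sol_up a k)"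
  unfolding sol_def by simp

lemma sol_nonpos: "sol a (- int k) = fst (sol_down a k)"
  unfolding sol_def by (cases "k = 0") simp_all

lemma snd_sol_up: "snd (sol_up a k) = sol a (int k + 1)"
  using sol_nonneg[of a "Suc k"] by (simp add: add.commute)

lemma snd_sol_down: "snd (sol_down a k) = sol a (1 - int k)"
proof (cases k)
  case 0
  then show ?thesis
    using sol_nonneg[of a 1] by simp
next
  case (Suc j)
  then show ?thesis
    using sol_nonpos[of a j] by simp
qed

lemma sol_rec: "sol a (x + 1) + sol a (x - 1) = of_real (a x) * sol a x"
proof (cases "1 \<le> x")
  case True
  define k where "k = nat (x - 1)"
  have x: "x = int k + 1"
    using True unfolding k_def by simp
  have "sol a (x + 1) = fst (sol_up a (Suc (Suc k)))"
    using sol_nonneg[of a "Suc (Suc k)"] x by (simp add: add.commute)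
  also have "\<dots> = of_real (a x) * sol a x - sol a (x - 1)"
    using x sol_nonneg[of a k] snd_sol_up[of a k] by simp
  finally show ?thesis
    by simp
next
  case False
  define k where "k = nat (- x)"
  have x: "x = - int k"
    using False unfolding k_def by simp
  have "x - 1 = - int (Suc k)"
    using x by simp
  then have "sol a (x - 1) = fst (sol_down a (Suc k))"
    using sol_nonpos[of a "Suc k"] by (simp only:)
  also have "\<dots> = of_real (a x) * sol a x - sol a (x + 1)"
    using x sol_nonpos[of a k] snd_sol_down[of a k] by simp
  finally show ?thesis
    by simp
qed

lemma sol_wedge: "wedge (sol a x) (sol a (x + 1)) = 1"
proof (induction x rule: int_induct[where k = 0])
  case base
  then show ?case
    using sol_nonneg[of a 0] sol_nonneg[of a 1] by (simp add: wedge_def)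
next
  case (step1 i)
  have "sol a (i + 1 + 1) = of_real (a (i + 1)) * sol a (i + 1) - sol a i"
    using sol_rec[of a "i + 1"] by (simp add: algebra_simps)
  then show ?case
    using step1.IH wedge_antisym[of "sol a (i + 1)" "sol a i"] by simp
next
  case (step2 i)
  have "sol a (i - 1) = of_real (a i) * sol a i - sol a (i + 1)"
    using sol_rec[of a i] by (simp add: algebra_simps)
  then show ?case
    using step2.IH wedge_antisym[of "sol a (i + 1)" "sol a i"] by simp
qed

lemma frieze_aux_eq_wedge: "frieze_aux a i t = wedge (sol a i) (sol a (i + int t))"
proof (induction a i t rule: frieze_aux.induct)
  case (2 a i)
  then show ?case
    using sol_wedge[of a i] by simp
next
  case (3 a i t)
  have "sol a (i + int (Suc (Suc t)))
      = of_real (a (i + int t + 1)) * sol a (i + int (Suc t)) - sol a (i + int t)"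
    using sol_rec[of a "i + int t + 1"] by (simp add: algebra_simps)
  then show ?case
    using 3 by simp
qed simp

section \<open>The lifted angulation of T\<close>

context
  fixes n :: nat and T :: "parc set"
  assumes arcs_ok: "\<forall>\<alpha>\<in>T. arc_ok n \<alpha>" and n_pos: "0 < n"
begin

lemma lifted_arcs_iff:
  "(c, e) \<in> lifted_arcs n T \<longleftrightarrow> (\<exists>d. Arc (nat (c mod int n)) d \<in> T \<and> e = c + int d)"
proof
  assume "(c, e) \<in> lifted_arcs n T"
  then obtain i d k where "Arc i d \<in> T" "c = int i + k * int n" "e = c + int d"
    unfolding lifted_arcs_def by blast
  moreover have "i < n"
    using arcs_ok calculation(1) by fastforce
  ultimately show "\<exists>d. Arc (nat (c mod int n)) d \<in> T \<and> e = c + int d"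
    by auto
next
  assume "\<exists>d. Arc (nat (c mod int n)) d \<in> T \<and> e = c + int d"
  moreover have "c = int (nat (c mod int n)) + c div int n * int n"
    using n_pos by simp
  ultimately show "(c, e) \<in> lifted_arcs n T"
    unfolding lifted_arcs_def by blast
qed

lemma lifted_spokes_iff: "p \<in> lifted_spokes n T \<longleftrightarrow> Spoke (nat (p mod int n)) \<in> T"
proof
  assume "p \<in> lifted_spokes n T"
  then obtain i k where "Spoke i \<in> T" "p = int i + k * int n"
    unfolding lifted_spokes_def by blast
  moreover have "i < n"
    using arcs_ok calculation(1) by fastforce
  ultimately show "Spoke (nat (p mod int n)) \<in> T"
    by auto
next
  assume "Spoke (nat (p mod int n)) \<in> T"
  moreover have "p = int (nat (p mod int n)) + p div int n * int n"
    using n_pos by simp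
  ultimately show "p \<in> lifted_spokes n T"
    unfolding lifted_spokes_def by blast
qed

lemma mod_diff_eq_of_add_mod:
  assumes "(i + d) mod n = nat (x mod int n)" "i < n"
  shows "(x - int d) mod int n = int i"
proof -
  have "(x - int d) mod int n = (x mod int n - int d) mod int n"
    by (simp add: mod_diff_left_eq)
  also have "\<dots> = ((int i + int d) mod int n - int d) mod int n"
    using arg_cong[OF assms(1), of int] n_pos by (simp add: zmod_int)
  also have "\<dots> = int i"
    using assms(2) by (simp add: mod_diff_left_eq)
  finally show ?thesis .
qed

lemma lifted_corners_eq_corners:
  "lifted_corners (lifted_arcs n T) (lifted_spokes n T) x = corners n T (nat (x mod int n))"
proof -
  let ?L = "lifted_arcs n T" and ?r = "nat (x mod int n)"
  have "{i. Spoke i \<in> T \<and> i = ?r} = (if Spoke ?r \<in> T then {?r} else {})"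
    by auto
  then have spokes: "card {i. Spoke i \<in> T \<and> i = ?r} = (if x \<in> lifted_spokes n T then 1 else 0)"
    unfolding lifted_spokes_iff by simp
  have "{b. (x, b) \<in> ?L} = (\<lambda>d. x + int d) ` {d. Arc ?r d \<in> T}"
    "{(i, d). Arc i d \<in> T \<and> i = ?r} = Pair ?r ` {d. Arc ?r d \<in> T}"
    unfolding lifted_arcs_iff by auto
  then have arcs_from: "card {b. (x, b) \<in> ?L} = card {(i, d). Arc i d \<in> T \<and> i = ?r}"
    by (simp add: card_image inj_on_def)
  let ?Q = "{(i, d). Arc i d \<in> T \<and> (i + d) mod n = ?r}"
  have "?Q = (\<lambda>a. (nat (a mod int n), nat (x - a))) ` {a. (a, x) \<in> ?L}"
  proof (intro set_eqI iffI)
    fix id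
    assume "id \<in> ?Q"
    then obtain i d where id: "id = (i, d)" "Arc i d \<in> T" "(i + d) mod n = ?r"
      by auto
    then have "(x - int d) mod int n = int i"
      using mod_diff_eq_of_add_mod arcs_ok by fastforce
    then show "id \<in> (\<lambda>a. (nat (a mod int n), nat (x - a))) ` {a. (a, x) \<in> ?L}"
      using id unfolding lifted_arcs_iff by (intro image_eqI[of _ _ "x - int d"]) auto
  next
    fix id
    assume "id \<in> (\<lambda>a. (nat (a mod int n), nat (x - a))) ` {a. (a, x) \<in> ?L}"
    then obtain a where a: "(a, x) \<in> ?L" "id = (nat (a mod int n), nat (x - a))"
      by blast
    then obtain d where "Arc (nat (a mod int n)) d \<in> T" "x = a + int d"
      unfolding lifted_arcs_iff by blast
    moreover have "int ((nat (a mod int n) + d) mod n) = x mod int n"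
      using calculation(2) n_pos by (simp add: zmod_int mod_add_left_eq)
    ultimately show "id \<in> ?Q"
      using a(2) by auto
  qed
  moreover have "inj_on (\<lambda>a. (nat (a mod int n), nat (x - a))) {a. (a, x) \<in> ?L}"
    unfolding lifted_arcs_iff by (auto simp: inj_on_def)
  ultimately have arcs_to: "card {a. (a, x) \<in> ?L} = card ?Q"
    by (simp add: card_image)
  show ?thesis
    unfolding lifted_corners_def corners_def spokes arcs_from arcs_to by simp
qed

lemma window_mod:
  "inj_on (\<lambda>c. nat (c mod int n)) {k..<k + int n}"
  "(\<lambda>c. nat (c mod int n)) ` {k..<k + int n} = {..<n}"
proof -
  show inj: "inj_on (\<lambda>c. nat (c mod int n)) {k..<k + int n}"
  proof (rule inj_onI)
    fix c c'
    assume c: "c \<in> {k..<k + int n}" "c' \<in> {k..<k + int n}"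
      and "nat (c mod int n) = nat (c' mod int n)"
    moreover have "int (nat (c mod int n)) = c mod int n" "int (nat (c' mod int n)) = c' mod int n"
      using n_pos by simp_all
    ultimately have "c mod int n = c' mod int n"
      by metis
    then have "(c - k) mod int n = (c' - k) mod int n"
      by (rule mod_diff_cong) simp
    moreover have "(c - k) mod int n = c - k" "(c' - k) mod int n = c' - k"
      using c by (simp_all add: mod_pos_pos_trivial)
    ultimately show "c = c'"
      by simp
  qed
  have "(\<lambda>c. nat (c mod int n)) ` {k..<k + int n} \<subseteq> {..<n}"
    using n_pos by (auto simp: nat_less_iff)
  moreover have "card ((\<lambda>c. nat (c mod int n)) ` {k..<k + int n}) = n"
    using card_image[OF inj] by simp
  ultimately show "(\<lambda>c. nat (c mod int n)) ` {k..<k + int n} = {..<n}"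
    by (simp add: card_subset_eq)
qed

lemma card_lifted_spokes_window:
  "card {r \<in> lifted_spokes n T. k \<le> r \<and> r < k + int n} = num_spokes T"
proof -
  let ?f = "\<lambda>c. nat (c mod int n)"
  let ?A = "{c \<in> {k..<k + int n}. Spoke (?f c) \<in> T}"
  have "{r \<in> lifted_spokes n T. k \<le> r \<and> r < k + int n} = ?A"
    unfolding lifted_spokes_iff by auto
  moreover have "inj_on ?f ?A"
    by (rule inj_on_subset[OF window_mod(1)[of k]]) auto
  then have "card ?A = card (?f ` ?A)"
    by (simp add: card_image)
  moreover have "?f ` ?A = {i \<in> ?f ` {k..<k + int n}. Spoke i \<in> T}"
    by auto
  moreover have "i < n" if "Spoke i \<in> T" for i
    using arcs_ok that by (metis arc_ok.simps(1))
  then have "{i \<in> {..<n}. Spoke i \<in> T} = {i. Spoke i \<in> T}"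
    by auto
  ultimately show ?thesis
    unfolding num_spokes_def window_mod(2) by simp
qed

lemma card_lifted_arcs_window:
  "card {(c, e) \<in> lifted_arcs n T. k \<le> c \<and> c < k + int n} = card {(i, d). Arc i d \<in> T}"
proof -
  let ?f = "\<lambda>c. nat (c mod int n)"
  let ?A = "{(c, e) \<in> lifted_arcs n T. k \<le> c \<and> c < k + int n}"
  let ?g = "\<lambda>(c, e). (?f c, nat (e - c))"
  have "inj_on ?g ?A"
  proof (rule inj_onI)
    fix ce ce'
    assume "ce \<in> ?A" "ce' \<in> ?A" and g: "?g ce = ?g ce'"
    obtain c e c' e' where ce: "ce = (c, e)" "ce' = (c', e')"
      by fastforce
    have "c \<in> {k..<k + int n}" "c' \<in> {k..<k + int n}" "c \<le> e" "c' \<le> e'"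
      using \<open>ce \<in> ?A\<close> \<open>ce' \<in> ?A\<close> unfolding ce lifted_arcs_iff by auto
    moreover have "?f c = ?f c'" "nat (e - c) = nat (e' - c')"
      using g unfolding ce by simp_all
    ultimately have "c = c'" "e - c = e' - c'"
      using inj_onD[OF window_mod(1)] by auto
    then show "ce = ce'"
      unfolding ce by simp
  qed
  moreover have "?g ` ?A = {(i, d). Arc i d \<in> T}"
  proof (intro set_eqI iffI)
    fix id
    assume "id \<in> ?g ` ?A"
    then obtain c e where "(c, e) \<in> lifted_arcs n T" "id = (?f c, nat (e - c))"
      by auto
    then show "id \<in> {(i, d). Arc i d \<in> T}"
      unfolding lifted_arcs_iff by auto
  next
    fix id
    assume "id \<in> {(i, d). Arc i d \<in> T}"
    then obtain i d where id: "id = (i, d)" "Arc i d \<in> T"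
      by auto
    then have "i < n"
      using arcs_ok by (metis arc_ok.simps(2))
    then have "i \<in> ?f ` {k..<k + int n}"
      unfolding window_mod(2) by simp
    then obtain c where "c \<in> {k..<k + int n}" "?f c = i"
      by blast
    then show "id \<in> ?g ` ?A"
      using id unfolding lifted_arcs_iff by (intro image_eqI[of _ _ "(c, c + int d)"]) auto
  qed
  ultimately show ?thesis
    using card_image[of ?g ?A] by simp
qed

end

lemma lifted_angulation_of_angulation:
  assumes "0 < m" "0 < n" "angulation m n T" "1 \<le> num_spokes T"
  shows "lifted_angulation m n (lifted_arcs n T) (lifted_spokes n T)"
proof
  let ?L = "lifted_arcs n T" and ?P = "lifted_spokes n T"
  have arcs_ok: "\<forall>\<alpha>\<in>T. arc_ok n \<alpha>" and nc: "noncrossing n T"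
    using assms(3) unfolding angulation_def by auto
  show "0 < m" "0 < n"
    using assms(1,2) .
  show "a + 2 \<le> b \<and> b \<le> a + int n" if "(a, b) \<in> ?L" for a b
    using that arcs_ok unfolding lifted_arcs_def by fastforce
  show "p + k * int n \<in> ?P" if p: "p \<in> ?P" for p k
  proof -
    obtain i k' where "Spoke i \<in> T" "p = int i + k' * int n"
      using p unfolding lifted_spokes_def by blast
    then show ?thesis
      unfolding lifted_spokes_def by (intro CollectI exI[of _ i] exI[of _ "k' + k"]) (simp add: algebra_simps)
  qed
  obtain i where "Spoke i \<in> T"
    using assms(4) card.empty unfolding num_spokes_def by fastforce
  then have "int i + 0 * int n \<in> ?P"
    unfolding lifted_spokes_def by blast
  then show "?P \<noteq> {}"
    by blast
  show "noncrossing_arcs ?L"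
    using nc unfolding noncrossing_def noncrossing_arcs_def by blast
  show "\<not> (a < p \<and> p < b)" if "(a, b) \<in> ?L" "p \<in> ?P" for a b p
    using nc that unfolding noncrossing_def by blast
  show "card (region_vertices (?L - {(a, b)}) a b) = m + 2" if "(a, b) \<in> ?L" for a b
    using assms(3) that unfolding angulation_def below_vertices_eq by blast
  show "card (region_vertices ?L p q) = m + 1"
    if "p \<in> ?P" "q \<in> ?P" "p < q" "\<forall>r\<in>?P. \<not> (p < r \<and> r < q)" for p q
  proof -
    have "card (between_vertices ?L p q) + 1 = m + 2"
      using assms(3) that unfolding angulation_def by blast
    then show ?thesis
      unfolding between_vertices_eq by simp
  qed
qed

lemma lifted_frieze_of_angulation:
  assumes "0 < m" "0 < n" "angulation m n T" "1 \<le> num_spokes T"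
  shows "lifted_frieze m n (lifted_arcs n T) (lifted_spokes n T) (sol (frieze_a m n T))"
proof (intro lifted_frieze.intro lifted_frieze_axioms.intro)
  have arcs_ok: "\<forall>\<alpha>\<in>T. arc_ok n \<alpha>"
    using assms(3) unfolding angulation_def by simp
  show "lifted_angulation m n (lifted_arcs n T) (lifted_spokes n T)"
    using lifted_angulation_of_angulation[OF assms] .
  fix x
  have "frieze_a m n T x = real (lifted_corners (lifted_arcs n T) (lifted_spokes n T) x) * lam m"
    unfolding frieze_a_def lifted_corners_eq_corners[OF arcs_ok assms(2)] ..
  then show "sol (frieze_a m n T) (x + 1) + sol (frieze_a m n T) (x - 1)
      = of_real (real (lifted_corners (lifted_arcs n T) (lifted_spokes n T) x) * lam m)
        * sol (frieze_a m n T) x"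
    using sol_rec[of "frieze_a m n T" x] by simp
  show "wedge (sol (frieze_a m n T) x) (sol (frieze_a m n T) (x + 1)) = 1"
    by (rule sol_wedge)
qed

context lifted_angulation
begin

lemma arcs_within_period:
  assumes "p \<in> P"
  shows "arcs_within p (p + int n) = {(c, e) \<in> L. p \<le> c \<and> c < p + int n}"
proof -
  have "p + int n \<in> P"
    using spokes_periodic[OF assms, of 1] by simp
  then show ?thesis
    unfolding arcs_within_def using arc_spoke_noncrossing arc_less by fastforce
qed

lemma finite_arcs_starting_in: "finite {(c, e) \<in> L. a \<le> c \<and> c < b}"
  by (rule finite_subset[of _ "{a..b} \<times> {a..b + int n}"]) (auto dest: arc_bounds)

end

context lifted_frieze
begin

lemma unit_entries_eq_arcs:
  "{(i, j). k \<le> i \<and> i \<le> k + int n - 1 \<and> i + 2 \<le> j \<and> F i j = 1}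
    = {(c, e) \<in> L. k \<le> c \<and> c < k + int n}"
proof (intro set_eqI iffI)
  fix ij
  assume "ij \<in> {(i, j). k \<le> i \<and> i \<le> k + int n - 1 \<and> i + 2 \<le> j \<and> F i j = 1}"
  then obtain i j where "ij = (i, j)" "k \<le> i" "i \<le> k + int n - 1" "i + 2 \<le> j" "F i j = 1"
    by blast
  then show "ij \<in> {(c, e) \<in> L. k \<le> c \<and> c < k + int n}"
    using F_eq_1_iff by auto
next
  fix ij
  assume "ij \<in> {(c, e) \<in> L. k \<le> c \<and> c < k + int n}"
  then obtain c e where "ij = (c, e)" "(c, e) \<in> L" "k \<le> c" "c < k + int n"
    by blast
  moreover have "c + 2 \<le> e"
    using arc_bounds calculation(2) by blast
  ultimately show "ij \<in> {(i, j). k \<le> i \<and> i \<le> k + int n - 1 \<and> i + 2 \<le> j \<and> F i j = 1}"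
    using F_eq_1_iff by auto
qed

end

theorem proposition4p23:
  fixes m n s :: nat and T :: "parc set" and k :: int
  assumes "0 < m" and "0 < n" and "m dvd n"
    and "1 \<le> s" and "s \<le> n div m"
    and "angulation m n T" and "num_spokes T = s"
  shows "finite {(i, j). k \<le> i \<and> i \<le> k + int n - 1 \<and> i + 2 \<le> j \<and> frieze m n T i j = 1}
       \<and> card {(i, j). k \<le> i \<and> i \<le> k + int n - 1 \<and> i + 2 \<le> j \<and> frieze m n T i j = 1}
           = n div m - s"
proof -
  let ?L = "lifted_arcs n T" and ?P = "lifted_spokes n T"
  interpret lifted_frieze m n ?L ?P "sol (frieze_a m n T)"
    using lifted_frieze_of_angulation assms by simp
  have arcs_ok: "\<forall>\<alpha>\<in>T. arc_ok n \<alpha>"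
    using assms(6) unfolding angulation_def by simp
  have "frieze m n T i j = F i j" if "i \<le> j" for i j
    using that unfolding frieze_def F_def frieze_aux_eq_wedge by simp
  then have entries: "{(i, j). k \<le> i \<and> i \<le> k + int n - 1 \<and> i + 2 \<le> j \<and> frieze m n T i j = 1}
      = {(c, e) \<in> ?L. k \<le> c \<and> c < k + int n}"
    unfolding unit_entries_eq_arcs[symmetric] by force
  obtain p where "p \<in> ?P"
    using spokes_nonempty by blast
  then have "int n = int m * (int s + int (card {(i, d). Arc i d \<in> T}))"
    using period_width arcs_within_period card_lifted_arcs_window[OF arcs_ok assms(2)]
      card_lifted_spokes_window[OF arcs_ok assms(2)] assms(7) by simp
  then have "n = m * (s + card {(i, d). Arc i d \<in> T})"
    by (metis of_nat_add of_nat_eq_iff of_nat_mult)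
  then have "n div m - s = card {(i, d). Arc i d \<in> T}"
    using assms(1) by simp
  then show ?thesis
    unfolding entries using finite_arcs_starting_in card_lifted_arcs_window[OF arcs_ok assms(2)] by simp
qed

end
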